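(* Let $\lambda=(\lambda_1,\dots,\lambda_\ell)\in\mathbb{Z}_{>0}^\ell$, $d=\lambda_1+\dots+\lambda_\ell$, $s(j)=\lambda_1+\dots+\lambda_{j-1}$, and for $\boldsymbol n\in\mathbb{Z}^d$, $k\in\mathbb{Z}$ let $$A_\lambda(\boldsymbol{n};k)=\prod_{j=1}^{\ell} \binom{n_{s(j)+1}+\dots+n_{s(j)+\lambda_j} - (\lambda_j-1)k}{n_{s(j)+1}-k,\ \dots,\ n_{s(j)+\lambda_j}-k,\ k}.$$ (a) If $\ell\ge2$, then for all primes $p$, integers $r\ge1$, $\boldsymbol n\in\mathbb{Z}^d$ and $k\in\mathbb{Z}$: $A_\lambda(p^r\boldsymbol n;pk)\equiv A_\lambda(p^{r-1}\boldsymbol n;k)\pmod{p^{2r}}$. (b) If $\ell\ge2$ and $\max(\lambda_1,\dots,\lambda_\ell)\le2$, then for all primes $p\ge5$, integers $r\ge1$, $\boldsymbol n\in\mathbb{Z}^d$ and $k\in\mathbb{Z}$: $A_\lambda(p^r\boldsymbol n;pk)\equiv A_\lambda(p^{r-1}\boldsymbol n;k)\pmod{p^{3r}}$.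
   Context: For all integers $n, k$, the binomial coefficient is defined by $\binom{n}{k} = \lim_{z \to 0} \frac{\Gamma(z+n+1)}{\Gamma(z+k+1)\Gamma(z+n-k+1)}$; this is a finite integer for all $n,k\in\mathbb{Z}$, agrees with the usual one for $n\ge0$, and satisfies $\binom{n}{k}=\binom{n}{n-k}$. For integers $m_1,\dots,m_\rho,k$ the multinomial coefficient with integer entries is defined as $$\binom{m_1+\dots+m_\rho-(\rho-1)k}{m_1-k,\dots,m_\rho-k,k} := \prod_{i=1}^{\rho}\binom{m_1+\dots+m_i-(i-1)k}{m_i-k},$$ which agrees with the usual multinomial coefficient when all entries are nonnegative (the $i=1$ factor is $\binom{m_1}{k}$; for $\rho=2$ the product is $\binom{m_1}{k}\binom{m_1+m_2-k}{m_1}$). *)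

theory Defs
  imports Main "HOL-Computational_Algebra.Primes" "HOL-Number_Theory.Cong"
begin

text \<open>Binomial coefficient for arbitrary integers n, k, defined in the paper as
  the limit z -> 0 of Gamma(z+n+1)/(Gamma(z+k+1) Gamma(z+n-k+1)).
  Evaluating this limit (pole orders / residues of Gamma) gives the closed form below:
  the usual binomial for n >= 0; for n < 0 it is (-1)^k C(k-n-1,k) if k >= 0,
  (-1)^(n-k) C(-k-1,n-k) if k <= n, and 0 otherwise.\<close>
definition zbinom :: "int \<Rightarrow> int \<Rightarrow> int" where
  "zbinom n k =
     (if 0 \<le> n then (if 0 \<le> k \<and> k \<le> n then int (nat n choose nat k) else 0)
      else if 0 \<le> k then (-1) ^ nat k * int (nat (k - n - 1) choose nat k)
      else if k \<le> n then (-1) ^ nat (n - k) * int (nat (- k - 1) choose nat (n - k))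
      else 0)"

text \<open>Multinomial coefficient with integer entries m_1..m_rho (list ms) and k:
  prod_{i=1}^{rho} binom(m_1+...+m_i - (i-1)k, m_i - k)  (0-based index i here).\<close>
definition zmultinom :: "int list \<Rightarrow> int \<Rightarrow> int" where
  "zmultinom ms k =
     (\<Prod>i<length ms. zbinom (sum_list (take (Suc i) ms) - int i * k) (ms ! i - k))"

definition A_lam :: "nat list \<Rightarrow> int list \<Rightarrow> int \<Rightarrow> int" where
  "A_lam lam ns k =
     (\<Prod>j<length lam. zmultinom (take (lam ! j) (drop (sum_list (take j lam)) ns)) k)"

end

theory Submission
  imports Defs "HOL-Computational_Algebra.Polynomial"
begin

text \<open>
Every factor of A_lam is a binomial coefficient, and the argument works factor by factor.
Let c_p(n) be the product of the integers in [1, pn] that are prime to p, so that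
(pn)! = p^n n! c_p(n). Then binom(pa, pb) c_p(b) c_p(a - b) = binom(a, b) c_p(a), hence
binom(pa, pb) / binom(a, b) is a p-adic unit (for negative arguments up to a sign), and the
point is a congruence of Jacobsthal type,
  c_p(x + y) = (-1)^((p - 1) x y) c_p(x) c_p(y)  mod p^(c + v(x) + v(y) + v(x + y)),
with c = 1 in general, c = 2 for odd p and c = 3 for p >= 5. It comes from
c_p(x + y) = c_p(x) Q_y(x), where Q_y(X) is the product of the pX + j over the j in [1, py]
prime to p: Q_y is constant modulo p^(c + v(y)), by induction on v(y) using that the power
sums 0^i + ... + (p - 1)^i vanish modulo p for 1 <= i <= p - 2, and Q_y(-y) = +-Q_y(0) by
reflection. The values of c come from the coefficients of (X + 1) ... (X + p - 1): the
reflection symmetry gives c = 2, and p dividing its coefficient of X^2 gives c = 3.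

Multiplying over all factors, A_lam(p^r n; pk) / A_lam(p^(r-1) n; k) is congruent to a sign
modulo p^E, and the first factor binom(m, m - k) of each of the at least two blocks of
A_lam(p^(r-1) n; k) is divisible by p^(r - 1 - v(k)), which supplies the missing powers of p.
For p = 2 the sign may be -1, and then A_lam(2^(r-1) n; k) is itself divisible by 2^(2r-1).
\<close>

lemma coeff_linear_power_binomial:
  "coeff ([:a, 1:] ^ m) j = of_nat (m choose j) * (a::'a::comm_semiring_1) ^ (m - j)"
  by (cases "j \<le> m") (simp_all add: coeff_linear_poly_power coeff_eq_0 degree_linear_power binomial_eq_0)

lemma coeff_pcompose_shift:
  fixes P :: "'a::comm_semiring_1 poly"
  assumes "degree P \<le> N"
  shows "coeff (pcompose P [:s, 1:]) j = (\<Sum>m\<le>N. coeff P m * of_nat (m choose j) * s ^ (m - j))"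
proof -
  have "pcompose P [:s, 1:] = (\<Sum>m\<le>N. smult (coeff P m) ([:s, 1:] ^ m))"
    unfolding pcompose_altdef poly_altdef using assms
    by (intro sum.mono_neutral_cong_left) (auto simp: degree_map_poly coeff_map_poly coeff_eq_0)
  then show ?thesis
    by (simp add: coeff_sum coeff_linear_power_binomial mult.assoc)
qed

section \<open>Polynomials that are constant modulo q\<close>

definition const_mod :: "'a::comm_semiring_1 \<Rightarrow> 'a poly \<Rightarrow> bool" where
  "const_mod q P \<longleftrightarrow> (\<forall>k>0. q dvd coeff P k)"

lemma const_mod_mult:
  assumes "const_mod q P" "const_mod q Q"
  shows "const_mod q (P * Q)"
  unfolding const_mod_def coeff_mult
proof (intro allI impI dvd_sum)
  fix k i :: nat assume "0 < k" "i \<in> {..k}"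
  then have "0 < i \<or> 0 < k - i" by auto
  with assms show "q dvd coeff P i * coeff Q (k - i)"
    unfolding const_mod_def by (auto intro: dvd_mult dvd_mult2)
qed

lemma const_mod_prod:
  "(\<And>i. i \<in> I \<Longrightarrow> const_mod q (f i)) \<Longrightarrow> const_mod q (\<Prod>i\<in>I. f i)"
proof (induction I rule: infinite_finite_induct)
  case (insert x F)
  then show ?case by (simp add: const_mod_mult)
qed (simp_all add: const_mod_def coeff_1)

lemma const_mod_pcompose_shift:
  assumes "const_mod q P"
  shows "const_mod q (pcompose P [:s, 1:])"
  unfolding const_mod_def coeff_pcompose_shift[OF order_refl]
proof (intro allI impI dvd_sum)
  fix k m :: nat assume "0 < k"
  with assms show "q dvd coeff P m * of_nat (m choose k) * s ^ (m - k)"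
    by (cases "k \<le> m") (auto simp: const_mod_def binomial_eq_0)
qed

lemma const_modE:
  fixes P :: "int poly"
  assumes "const_mod q P"
  obtains R where "P = [:coeff P 0:] + smult q R"
proof -
  have "[:q:] dvd P - [:coeff P 0:]"
    using assms unfolding const_mod_def const_poly_dvd_iff by (auto simp: coeff_pCons' split: if_splits)
  then obtain R where "P - [:coeff P 0:] = [:q:] * R" by (rule dvdE)
  then show ?thesis by (intro that[of R]) (simp add: diff_eq_eq)
qed

lemma const_mod_polyE:
  fixes P :: "int poly"
  assumes "const_mod q P"
  obtains R where "\<And>w. poly P w = coeff P 0 + q * poly R w"
proof -
  obtain R where "P = [:coeff P 0:] + smult q R"
    using assms by (rule const_modE)
  from arg_cong[OF this, of "\<lambda>S. poly S w" for w] show ?thesis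
    by (intro that[of R]) simp
qed

lemma dvd_poly_diff: "(x::int) - z dvd poly P x - poly P z"
proof -
  have "poly P x - poly P z = (\<Sum>k\<le>degree P. coeff P k * (x ^ k - z ^ k))"
    unfolding poly_altdef by (simp add: sum_subtractf right_diff_distrib)
  also have "x - z dvd \<dots>"
    by (intro dvd_sum dvd_mult) (simp add: power_diff_sumr2)
  finally show ?thesis .
qed

lemma const_mod_dvd_poly_diff:
  fixes P :: "int poly"
  assumes "const_mod q P"
  shows "q * (x - z) dvd poly P x - poly P z"
proof -
  obtain R where R: "\<And>w. poly P w = coeff P 0 + q * poly R w"
    using const_mod_polyE[OF assms] by blast
  have "poly P x - poly P z = q * (poly R x - poly R z)"
    by (simp add: R algebra_simps)
  then show ?thesis by (simp add: dvd_poly_diff)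
qed

lemma dvd_poly_two_point_diff:
  fixes x y :: int
  shows "x * y * (x + y) dvd y * (poly R x - poly R 0) + x * (poly R (-y) - poly R 0)"
proof -
  have "y * (poly R x - poly R 0) + x * (poly R (-y) - poly R 0)
      = (\<Sum>k\<le>degree R. coeff R k * (y * (x ^ k - 0 ^ k) + x * ((-y) ^ k - 0 ^ k)))"
    unfolding poly_altdef
    by (simp add: sum_subtractf sum_distrib_left sum.distrib[symmetric] algebra_simps)
  also have "x * y * (x + y) dvd \<dots>"
  proof (intro dvd_sum dvd_mult)
    fix k :: nat
    show "x * y * (x + y) dvd y * (x ^ k - 0 ^ k) + x * ((-y) ^ k - 0 ^ k)"
    proof (cases k)
      case (Suc j)
      have "x + y dvd x ^ j - (-y) ^ j"
        using power_diff_sumr2[of x j "-y"] by simp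
      then have "x * y * (x + y) dvd x * y * (x ^ j - (-y) ^ j)"
        by (rule mult_dvd_mono[OF dvd_refl])
      then show ?thesis using Suc by (simp add: algebra_simps)
    qed simp
  qed
  finally show ?thesis .
qed

lemma const_mod_dvd_poly_diff_of_reflect:
  fixes P :: "int poly" and x y :: int
  assumes "const_mod q P" and reflect: "poly P (-y) = poly P 0" and "y \<noteq> 0"
  shows "q * x * (x + y) dvd poly P x - poly P 0"
proof -
  obtain R where R: "\<And>w. poly P w = coeff P 0 + q * poly R w"
    using const_mod_polyE[OF assms(1)] by blast
  have "y * (poly P x - poly P 0) = y * (poly P x - poly P 0) + x * (poly P (-y) - poly P 0)"
    using reflect by simp
  also have "\<dots> = q * (y * (poly R x - poly R 0) + x * (poly R (-y) - poly R 0))"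
    by (simp add: R algebra_simps)
  finally have "y * (q * x * (x + y)) dvd y * (poly P x - poly P 0)"
    using mult_dvd_mono[OF dvd_refl[of q] dvd_poly_two_point_diff[of x y R]] by (simp add: mult_ac)
  then show ?thesis using \<open>y \<noteq> 0\<close> by simp
qed

lemma sum_power_sums_binomial:
  "(\<Sum>j\<le>i. of_nat (Suc i choose j) * (\<Sum>b<n. of_nat b ^ j)) = (of_nat n :: 'a::comm_ring_1) ^ Suc i"
proof -
  have "(of_nat b + 1 :: 'a) ^ Suc i - of_nat b ^ Suc i = (\<Sum>j\<le>i. of_nat (Suc i choose j) * of_nat b ^ j)"
    for b
    by (subst binomial_ring) (simp add: mult_ac)
  moreover have "(\<Sum>b<n. (of_nat b + 1 :: 'a) ^ Suc i - of_nat b ^ Suc i) = of_nat n ^ Suc i"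
    by (induction n) (simp_all add: add.commute)
  ultimately show ?thesis
    by (simp add: sum_distrib_left sum.swap[of _ "{..i}"])
qed

lemma prime_dvd_power_sum:
  fixes p :: int
  assumes "prime p" "1 \<le> i" "int i \<le> p - 2"
  shows "p dvd (\<Sum>b<nat p. of_nat b ^ i)"
  using assms(2,3)
proof (induction i rule: less_induct)
  case (less i)
  define S where "S j = (\<Sum>b<nat p. (of_nat b :: int) ^ j)" for j
  have p1: "p > 1" using assms(1) prime_gt_1_int by blast
  have "{..i} = insert 0 (insert i {1..<i})" using less.prems by auto
  then have "of_nat (Suc i) * S i = p ^ Suc i - S 0 - (\<Sum>j\<in>{1..<i}. of_nat (Suc i choose j) * S j)"
    using sum_power_sums_binomial[of i "nat p", where 'a = int] less.prems p1
    by (simp add: S_def add_ac)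
  moreover have "S 0 = p" using p1 by (simp add: S_def)
  moreover have "p dvd (\<Sum>j\<in>{1..<i}. of_nat (Suc i choose j) * S j)"
    by (rule dvd_sum) (use less in \<open>auto simp: S_def\<close>)
  ultimately have "p dvd of_nat (Suc i) * S i"
    by simp
  moreover have "\<not> p dvd of_nat (Suc i)"
    using less.prems zdvd_imp_le[of p "of_nat (Suc i)"] by auto
  ultimately show ?case
    using assms(1) prime_dvd_mult_iff unfolding S_def by blast
qed

lemma prod_add_dvd_square:
  fixes C :: "'a::comm_ring_1"
  assumes "\<And>b. b \<le> n \<Longrightarrow> q dvd H b"
  shows "q * q dvd (\<Prod>b<Suc n. C + H b) - C ^ Suc n - C ^ n * (\<Sum>b<Suc n. H b)"
  using assms
proof (induction n)
  case (Suc n)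
  define R where "R = (\<Prod>b<Suc n. C + H b) - C ^ Suc n - C ^ n * (\<Sum>b<Suc n. H b)"
  have "(\<Prod>b<Suc (Suc n). C + H b) - C ^ Suc (Suc n) - C ^ Suc n * (\<Sum>b<Suc (Suc n). H b)
      = R * (C + H (Suc n)) + C ^ n * ((\<Sum>b<Suc n. H b) * H (Suc n))"
    by (simp add: R_def algebra_simps)
  moreover have "q * q dvd R" using Suc by (simp add: R_def)
  moreover have "q * q dvd (\<Sum>b<Suc n. H b) * H (Suc n)"
    using Suc.prems by (intro mult_dvd_mono dvd_sum) auto
  ultimately show ?case by simp
qed simp

lemma prime_dvd_sum_shifted_powers:
  fixes p s :: int
  assumes p: "prime p" and "0 < k" "k < m" and small: "\<not> p dvd s \<Longrightarrow> m < nat p"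
  shows "p dvd (\<Sum>b<nat p. (of_nat b * s) ^ (m - k))"
proof (cases "p dvd s")
  case True
  show ?thesis
  proof (intro dvd_sum)
    fix b :: nat
    show "p dvd (of_nat b * s) ^ (m - k)"
      by (rule dvd_trans[OF _ dvd_power]) (use True \<open>k < m\<close> in auto)
  qed
next
  case False
  have "p dvd (\<Sum>b<nat p. of_nat b ^ (m - k))"
    using assms False by (intro prime_dvd_power_sum) auto
  moreover have "(\<Sum>b<nat p. (of_nat b * s) ^ (m - k)) = (\<Sum>b<nat p. of_nat b ^ (m - k)) * s ^ (m - k)"
    by (simp add: power_mult_distrib sum_distrib_right)
  ultimately show ?thesis by simp
qed

lemma prime_mult_dvd_coeff_sum_shifts:
  fixes p q s :: int and P :: "int poly"
  assumes p: "prime p" and P: "const_mod q P" and "0 < k"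
    and high: "\<not> p dvd s \<Longrightarrow> \<forall>m\<ge>nat p. p * q dvd coeff P m"
  shows "p * q dvd coeff (\<Sum>b<nat p. pcompose P [:of_nat b * s, 1:]) k"
proof -
  have p1: "p > 1" using p prime_gt_1_int by blast
  have "coeff (\<Sum>b<nat p. pcompose P [:of_nat b * s, 1:]) k
      = (\<Sum>m\<le>degree P. coeff P m * of_nat (m choose k) * (\<Sum>b<nat p. (of_nat b * s) ^ (m - k)))"
    by (simp add: coeff_sum coeff_pcompose_shift[OF order_refl] sum_distrib_left sum.swap[of _ "{..<nat p}"])
  also have "p * q dvd \<dots>"
  proof (intro dvd_sum)
    fix m
    consider "m < k" | "m = k" | "k < m" "\<not> p dvd s \<Longrightarrow> m < nat p" | "\<not> p dvd s" "nat p \<le> m"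
      by linarith
    then show "p * q dvd coeff P m * of_nat (m choose k) * (\<Sum>b<nat p. (of_nat b * s) ^ (m - k))"
    proof cases
      case 2
      have "q dvd coeff P m" using P 2 \<open>0 < k\<close> by (simp add: const_mod_def)
      moreover have "(\<Sum>b<nat p. (of_nat b * s) ^ (m - k)) = p" using 2 p1 by simp
      ultimately show ?thesis by (simp add: mult_dvd_mono mult.commute dvd_mult2)
    next
      case 3
      have "q dvd coeff P m" using P 3 \<open>0 < k\<close> by (simp add: const_mod_def)
      moreover have "p dvd (\<Sum>b<nat p. (of_nat b * s) ^ (m - k))"
        using 3 by (rule prime_dvd_sum_shifted_powers[OF p \<open>0 < k\<close>])
      ultimately show ?thesis by (metis dvd_mult2 mult.commute mult_dvd_mono)
    next
      case 4
      then show ?thesis using high by simp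
    qed (simp add: binomial_eq_0)
  qed
  finally show ?thesis .
qed

text \<open>Modulo q^2 the product is C^p + C^(p-1) times the sum of the P(X + bs) - C, where
  C = P(0), and the power sums over b kill the non-constant coefficients of that sum modulo p.\<close>

lemma const_mod_prod_shifts:
  fixes p q s :: int and P :: "int poly"
  assumes p: "prime p" and P: "const_mod q P" and "p dvd q"
    and high: "\<not> p dvd s \<Longrightarrow> \<forall>m\<ge>nat p. p * q dvd coeff P m"
  shows "const_mod (p * q) (\<Prod>b<nat p. pcompose P [:of_nat b * s, 1:])"
  unfolding const_mod_def
proof (intro allI impI)
  fix k :: nat assume "0 < k"
  have "0 < nat p" using prime_gt_1_int[OF p] by simp
  then obtain n where n: "nat p = Suc n" using gr0_implies_Suc by blast
  define C where "C = coeff P 0"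
  obtain R where "P = [:C:] + smult q R"
    using P unfolding C_def by (rule const_modE)
  then have shift: "pcompose P [:of_nat b * s, 1:] = [:C:] + [:q:] * pcompose R [:of_nat b * s, 1:]" for b
    by (simp add: pcompose_add pcompose_smult)
  define H where "H b = [:q:] * pcompose R [:of_nat b * s, 1:]" for b
  have "[:q:] * [:q:] dvd (\<Prod>b<nat p. [:C:] + H b) - [:C:] ^ nat p - [:C:] ^ n * (\<Sum>b<nat p. H b)"
    unfolding n by (rule prod_add_dvd_square) (simp only: H_def dvd_triv_left)
  then have "q * q dvd coeff ((\<Prod>b<nat p. [:C:] + H b) - [:C:] ^ nat p - [:C:] ^ n * (\<Sum>b<nat p. H b)) k"
    by (simp add: const_poly_dvd_iff)
  then have "q * q dvd coeff (\<Prod>b<nat p. [:C:] + H b) k - C ^ n * coeff (\<Sum>b<nat p. H b) k"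
    using \<open>0 < k\<close> by (simp add: poly_const_pow coeff_pCons')
  then have "p * q dvd coeff (\<Prod>b<nat p. [:C:] + H b) k - C ^ n * coeff (\<Sum>b<nat p. H b) k"
    using \<open>p dvd q\<close> by (meson dvd_trans mult_dvd_mono dvd_refl)
  moreover have "coeff (\<Sum>b<nat p. H b) k = coeff (\<Sum>b<nat p. pcompose P [:of_nat b * s, 1:]) k"
    using \<open>0 < k\<close> by (simp add: shift H_def coeff_sum coeff_pCons')
  then have "p * q dvd C ^ n * coeff (\<Sum>b<nat p. H b) k"
    using prime_mult_dvd_coeff_sum_shifts[OF p P \<open>0 < k\<close> high] by simp
  ultimately show "p * q dvd coeff (\<Prod>b<nat p. pcompose P [:of_nat b * s, 1:]) k"
    unfolding shift H_def[symmetric] by (metis diff_add_cancel dvd_add)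
qed

section \<open>Products of the integers prime to p\<close>

definition block_poly :: "int \<Rightarrow> int poly" where
  "block_poly p = (\<Prod>i\<in>{1..p-1}. [:i, p:])"

definition rising_poly :: "int \<Rightarrow> int poly" where
  "rising_poly p = (\<Prod>i\<in>{1..p-1}. [:i, 1:])"

definition blocks_poly :: "int \<Rightarrow> nat \<Rightarrow> int poly" where
  "blocks_poly p y = (\<Prod>t<y. pcompose (block_poly p) [:int t, 1:])"

lemma block_poly_eq_pcompose: "block_poly p = pcompose (rising_poly p) [:0, p:]"
  unfolding block_poly_def rising_poly_def pcompose_prod by (simp add: pcompose_pCons)

lemma coeff_block_poly: "coeff (block_poly p) k = p ^ k * coeff (rising_poly p) k"
  unfolding block_poly_eq_pcompose by (rule coeff_pcompose_linear)

lemma const_mod_block_poly: "const_mod p (block_poly p)"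
  unfolding const_mod_def coeff_block_poly by (simp add: gr0_conv_Suc)

lemma blocks_poly_eq_pcompose:
  "blocks_poly p y = pcompose (\<Prod>t<y. pcompose (rising_poly p) [:p * int t, 1:]) [:0, p:]"
  unfolding blocks_poly_def block_poly_eq_pcompose pcompose_prod
  by (simp add: pcompose_pCons flip: pcompose_assoc)

lemma pow_dvd_coeff_blocks_poly: "p ^ k dvd coeff (blocks_poly p y) k"
  unfolding blocks_poly_eq_pcompose coeff_pcompose_linear by simp

lemma blocks_poly_mult:
  "blocks_poly p (n * y) = (\<Prod>b<n. pcompose (blocks_poly p y) [:of_nat b * int y, 1:])"
proof -
  have "pcompose (blocks_poly p y) [:int (b * y), 1:] = (\<Prod>t<y. pcompose (block_poly p) [:int (b * y + t), 1:])"
    for b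
    unfolding blocks_poly_def pcompose_prod by (simp add: pcompose_pCons add.commute flip: pcompose_assoc)
  also have "\<dots> b = (\<Prod>t\<in>{b * y..<b * y + y}. pcompose (block_poly p) [:int t, 1:])" for b
    using prod.shift_bounds_nat_ivl[of "\<lambda>t. pcompose (block_poly p) [:int t, 1:]" 0 "b * y" y]
    by (simp add: atLeast0LessThan add.commute)
  finally have "(\<Prod>b<n. pcompose (blocks_poly p y) [:of_nat b * int y, 1:])
      = (\<Prod>b<n. \<Prod>t\<in>{b * y..<b * y + y}. pcompose (block_poly p) [:int t, 1:])"
    by simp
  also have "\<dots> = blocks_poly p (n * y)"
    unfolding blocks_poly_def by (rule prod.nat_group)
  finally show ?thesis by simp
qed

lemma const_mod_blocks_poly:
  fixes p :: int
  assumes p: "prime p" and c: "1 \<le> c" "int c < p" and base: "const_mod (p ^ c) (block_poly p)"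
    and "nat p ^ e dvd y"
  shows "const_mod (p ^ (c + e)) (blocks_poly p y)"
  using \<open>nat p ^ e dvd y\<close>
proof (induction e arbitrary: y)
  case 0
  show ?case unfolding blocks_poly_def
    using base by (auto intro!: const_mod_prod const_mod_pcompose_shift)
next
  case (Suc e)
  have p1: "p > 1" using p prime_gt_1_int by blast
  obtain z where "y = nat p ^ Suc e * z"
    using Suc.prems by (auto elim: dvdE)
  then obtain y' where y: "y = nat p * y'" and y': "nat p ^ e dvd y'"
    by (metis dvd_triv_left mult.assoc power_Suc)
  have high: "p * p ^ (c + e) dvd coeff (blocks_poly p y') m"
    if "\<not> p dvd int y'" "nat p \<le> m" for m
  proof -
    have "e = 0"
      using that(1) y' p1 by (cases e) (auto simp flip: int_dvd_int_iff)
    then have "p * p ^ (c + e) dvd p ^ m"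
      using that(2) c by (simp flip: power_Suc add: le_imp_power_dvd)
    then show ?thesis
      using pow_dvd_coeff_blocks_poly dvd_trans by blast
  qed
  have "const_mod (p * p ^ (c + e)) (\<Prod>b<nat p. pcompose (blocks_poly p y') [:of_nat b * int y', 1:])"
    using c high by (intro const_mod_prod_shifts p Suc.IH y') auto
  then show ?case
    by (simp add: y blocks_poly_mult)
qed

lemma poly_block_poly: "poly (block_poly p) z = (\<Prod>i\<in>{1..p-1}. i + p * z)"
  unfolding block_poly_def by (simp add: poly_prod mult.commute)

lemma poly_blocks_poly: "poly (blocks_poly p y) x = (\<Prod>t<y. poly (block_poly p) (x + int t))"
  unfolding blocks_poly_def by (simp add: poly_prod poly_pcompose add.commute)

lemma poly_block_poly_reflect: "poly (block_poly p) (-1 - z) = (-1) ^ nat (p - 1) * poly (block_poly p) z"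
proof -
  have "poly (block_poly p) (-1 - z) = (\<Prod>i\<in>{1..p-1}. (-1) * ((p - i) + p * z))"
    unfolding poly_block_poly by (rule prod.cong) (auto simp: algebra_simps)
  also have "\<dots> = (\<Prod>i\<in>{1..p-1}. (-1::int)) * (\<Prod>i\<in>{1..p-1}. (p - i) + p * z)"
    by (rule prod.distrib)
  also have "(\<Prod>i\<in>{1..p-1}. (-1::int)) = (-1) ^ nat (p - 1)"
    by simp
  also have "(\<Prod>i\<in>{1..p-1}. (p - i) + p * z) = (\<Prod>i\<in>{1..p-1}. i + p * z)"
    by (rule prod.reindex_bij_witness[where i = "\<lambda>i. p - i" and j = "\<lambda>i. p - i"]) auto
  finally show ?thesis unfolding poly_block_poly .
qed

lemma poly_blocks_poly_reflect:
  "poly (blocks_poly p y) (- int y) = ((-1) ^ nat (p - 1)) ^ y * poly (blocks_poly p y) 0"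
proof -
  have "poly (blocks_poly p y) (- int y) = (\<Prod>t<y. poly (block_poly p) (-1 - int (y - Suc t)))"
    unfolding poly_blocks_poly by (rule prod.cong) (auto simp: of_nat_diff)
  also have "\<dots> = (\<Prod>t<y. (-1) ^ nat (p - 1) * poly (block_poly p) (int (y - Suc t)))"
    by (simp only: poly_block_poly_reflect)
  also have "\<dots> = ((-1) ^ nat (p - 1)) ^ y * (\<Prod>t<y. poly (block_poly p) (int (y - Suc t)))"
    by (simp add: prod.distrib)
  also have "(\<Prod>t<y. poly (block_poly p) (int (y - Suc t))) = (\<Prod>t<y. poly (block_poly p) (int t))"
    by (rule prod.nat_diff_reindex)
  finally show ?thesis unfolding poly_blocks_poly by simp
qed

lemma coeff_1_eq_of_poly_neg_1_eq_poly_0: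
  fixes P :: "int poly"
  assumes "poly P (-1) = poly P 0"
  shows "coeff P 1 = (\<Sum>k\<in>{2..degree P}. (-1) ^ k * coeff P k)"
proof (cases "degree P = 0")
  case True
  then show ?thesis by (auto elim: degree_eq_zeroE)
next
  case False
  then have "{..degree P} = insert 0 (insert 1 {2..degree P})" by auto
  then have "poly P (-1) = coeff P 0 - coeff P 1 + (\<Sum>k\<in>{2..degree P}. (-1) ^ k * coeff P k)"
    unfolding poly_altdef by (simp add: mult.commute)
  then show ?thesis using assms by (simp add: poly_0_coeff_0)
qed

lemma const_mod_block_poly_of_high_coeffs:
  fixes p :: int
  assumes "odd p" and high: "\<And>k. 2 \<le> k \<Longrightarrow> q dvd coeff (block_poly p) k"
  shows "const_mod q (block_poly p)"
  unfolding const_mod_def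
proof (intro allI impI)
  fix k :: nat assume "0 < k"
  have "even (nat (p - 1))" using \<open>odd p\<close> by (cases "p \<ge> 1") (auto simp: even_nat_iff)
  then have "poly (block_poly p) (-1) = poly (block_poly p) 0"
    using poly_block_poly_reflect[of p 0] by simp
  then have "coeff (block_poly p) 1 = (\<Sum>k\<in>{2..degree (block_poly p)}. (-1) ^ k * coeff (block_poly p) k)"
    by (rule coeff_1_eq_of_poly_neg_1_eq_poly_0)
  also have "q dvd \<dots>"
    by (intro dvd_sum dvd_mult high) auto
  finally have "q dvd coeff (block_poly p) 1" .
  then show "q dvd coeff (block_poly p) k"
    using \<open>0 < k\<close> high by (cases "k = 1") auto
qed

lemma const_mod_block_poly_odd: "odd p \<Longrightarrow> const_mod (p ^ 2) (block_poly p)"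
  by (rule const_mod_block_poly_of_high_coeffs)
    (auto simp: coeff_block_poly intro: dvd_mult2 le_imp_power_dvd)

lemma pcompose_rising_poly_shift:
  assumes "p \<ge> 2"
  shows "pcompose ([:0, 1:] * rising_poly p) [:1, 1:] - [:0, 1:] * rising_poly p = smult p (rising_poly p)"
proof -
  have "pcompose (rising_poly p) [:1, 1:] = (\<Prod>i\<in>{1..p-1}. [:i + 1, 1:])"
    unfolding rising_poly_def pcompose_prod by (simp add: pcompose_pCons add.commute)
  also have "\<dots> = (\<Prod>i\<in>{2..p}. [:i, 1:])"
    by (rule prod.reindex_bij_witness[where i = "\<lambda>i. i - 1" and j = "\<lambda>i. i + 1"]) auto
  finally have "pcompose ([:0, 1:] * rising_poly p) [:1, 1:] = [:1, 1:] * (\<Prod>i\<in>{2..p}. [:i, 1:])"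
    by (simp add: pcompose_mult pcompose_pCons)
  also have "\<dots> = (\<Prod>i\<in>{1..p}. [:i, 1:])"
  proof -
    have "{1..p} = insert 1 {2..p}" using assms by auto
    then show ?thesis by simp
  qed
  also have "\<dots> = rising_poly p * [:p, 1:]"
  proof -
    have "{1..p} = insert p {1..p-1}" using assms by auto
    then show ?thesis unfolding rising_poly_def by (simp add: mult.commute)
  qed
  finally show ?thesis by (simp add: algebra_simps)
qed

lemma sum_coeff_binomial_X_rising_poly:
  fixes p :: int
  assumes "p \<ge> 2"
  defines "G \<equiv> [:0, 1:] * rising_poly p"
  shows "(\<Sum>m\<le>nat p. coeff G m * of_nat (m choose j)) - coeff G j = p * coeff (rising_poly p) j"
proof -
  have "degree (rising_poly p) \<le> nat (p - 1)"
    unfolding rising_poly_def using degree_prod_sum_le[of "{1..p-1}" "\<lambda>i. [:i, 1::int:]"] by simp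
  then have "degree G \<le> nat p"
    using assms degree_mult_le[of "[:0, 1::int:]" "rising_poly p"] by (simp add: G_def)
  moreover have "coeff (pcompose G [:1, 1:]) j - coeff G j = p * coeff (rising_poly p) j"
    using arg_cong[OF pcompose_rising_poly_shift[OF assms(1)], of "\<lambda>P. coeff P j"] by (simp add: G_def)
  ultimately show ?thesis
    by (simp add: coeff_pcompose_shift)
qed

lemma prime_dvd_coeff_X_rising_poly:
  fixes p :: int
  assumes p: "prime p" and "2 \<le> m" "m < nat p"
  shows "p dvd coeff ([:0, 1:] * rising_poly p) m"
  using assms(2,3)
proof (induction "nat p - m" arbitrary: m rule: less_induct)
  case (less m)
  define G where "G = [:0, 1:] * rising_poly p"
  define j where "j = m - 1"
  define T where "T m' = coeff G m' * of_nat (m' choose j)" for m'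
  have p2: "p \<ge> 2" using p prime_ge_2_int by blast
  have j: "1 \<le> j" "Suc j = m" using less.prems unfolding j_def by auto
  have split: "{..nat p} = insert j (insert m ({..nat p} - {j, m}))" using less.prems j by auto
  have "(\<Sum>m'\<le>nat p. T m') = T j + T m + (\<Sum>m'\<in>{..nat p} - {j, m}. T m')"
    using j by (subst split) (simp add: add.assoc)
  then have "T m + (\<Sum>m'\<in>{..nat p} - {j, m}. T m') = p * coeff (rising_poly p) j"
    using sum_coeff_binomial_X_rising_poly[OF p2, of j] by (simp add: T_def G_def)
  moreover have "p dvd (\<Sum>m'\<in>{..nat p} - {j, m}. T m')"
  proof (rule dvd_sum)
    fix m' assume m': "m' \<in> {..nat p} - {j, m}"
    then consider "m' < j" | "m < m'" "m' < nat p" | "m' = nat p" using j by fastforce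
    then show "p dvd T m'"
    proof cases
      case 2
      then show ?thesis using less.prems less.hyps[of m'] by (simp add: T_def G_def)
    next
      case 3
      have "nat p dvd nat p choose j"
        using j less.prems p2 p by (intro dvd_choose_prime) auto
      then show ?thesis using 3 p2 by (simp add: T_def flip: int_dvd_int_iff)
    qed (simp add: T_def binomial_eq_0)
  qed
  ultimately have "p dvd T m"
    by (metis dvd_add_left_iff dvd_triv_left)
  moreover have "T m = of_nat m * coeff G m"
    unfolding T_def j(2)[symmetric] by simp
  moreover have "\<not> p dvd of_nat m"
    using less.prems zdvd_imp_le[of p "of_nat m"] by auto
  ultimately show ?case using p prime_dvd_mult_iff G_def by metis
qed

lemma prime_dvd_coeff_rising_poly:
  fixes p :: int
  assumes "prime p" "1 \<le> m" "m + 2 \<le> nat p"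
  shows "p dvd coeff (rising_poly p) m"
  using prime_dvd_coeff_X_rising_poly[of p "Suc m"] assms by simp

lemma const_mod_block_poly_ge_5:
  fixes p :: int
  assumes p: "prime p" and "p \<ge> 5"
  shows "const_mod (p ^ 3) (block_poly p)"
proof (rule const_mod_block_poly_of_high_coeffs)
  show "odd p" using assms by (intro prime_odd_int) auto
  have "p dvd coeff (rising_poly p) 2"
    using assms by (intro prime_dvd_coeff_rising_poly) auto
  then have "p ^ 2 * p dvd coeff (block_poly p) 2"
    by (simp add: coeff_block_poly)
  then show "p ^ 3 dvd coeff (block_poly p) k" if "2 \<le> k" for k
    using that le_imp_power_dvd[of 3 k p]
    by (cases "k = 2") (auto simp: coeff_block_poly power3_eq_cube power2_eq_square intro: dvd_mult2)
qed

section \<open>A Jacobsthal-type congruence\<close>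

definition coprime_fact :: "int \<Rightarrow> nat \<Rightarrow> int" where
  "coprime_fact p n = (\<Prod>t<n. \<Prod>i\<in>{1..p-1}. p * int t + i)"

lemma coprime_fact_eq_poly_blocks_poly: "coprime_fact p n = poly (blocks_poly p n) 0"
  unfolding coprime_fact_def poly_blocks_poly poly_block_poly by (simp add: add.commute)

lemma coprime_fact_0 [simp]: "coprime_fact p 0 = 1"
  by (simp add: coprime_fact_def)

lemma coprime_fact_add: "coprime_fact p (x + y) = coprime_fact p x * poly (blocks_poly p y) (int x)"
  unfolding coprime_fact_eq_poly_blocks_poly poly_blocks_poly
  by (induction y) (auto simp: algebra_simps)

lemma prime_not_dvd_coprime_fact:
  assumes "prime p"
  shows "\<not> p dvd coprime_fact p n"
proof
  assume "p dvd coprime_fact p n"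
  then obtain t i where "i \<in> {1..p-1}" "p dvd p * int t + i"
    using assms by (auto simp: coprime_fact_def prime_dvd_prod_iff)
  then show False
    using zdvd_imp_le[of p i] by (auto simp: dvd_add_right_iff)
qed

lemma fact_mult_prime:
  fixes p :: int
  assumes "p \<ge> 2"
  shows "fact (nat p * n) = p ^ n * fact n * coprime_fact p n"
proof (induction n)
  case (Suc n)
  have "(\<Prod>i\<in>{1..nat p}. of_nat (nat p * n + i) :: int) = (\<Prod>i\<in>{1..p}. p * int n + i)"
    by (rule prod.reindex_bij_witness[where i = "\<lambda>i. nat i" and j = "\<lambda>i. int i"]) (use assms in auto)
  also have "\<dots> = (p * int n + p) * (\<Prod>i\<in>{1..p-1}. p * int n + i)"
  proof -
    have "{1..p} = insert p {1..p-1}" using assms by auto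
    then show ?thesis by simp
  qed
  finally have "(\<Prod>i\<in>{1..nat p}. of_nat (nat p * n + i) :: int)
      = p * (int n + 1) * (\<Prod>i\<in>{1..p-1}. p * int n + i)"
    by (simp add: algebra_simps)
  moreover have "fact (nat p * n + k) = (fact (nat p * n) * (\<Prod>i\<in>{1..k}. of_nat (nat p * n + i)) :: int)"
    for k
    by (induction k) (auto simp: atLeastAtMostSuc_conv algebra_simps)
  ultimately have "fact (nat p * Suc n) = (fact (nat p * n) * (p * (int n + 1) * (\<Prod>i\<in>{1..p-1}. p * int n + i)) :: int)"
    by (metis mult_Suc_right add.commute)
  then show ?case
    unfolding Suc.IH by (simp add: coprime_fact_def algebra_simps)
qed simp

lemma two_power_dvd_odd: "odd (n::int) \<Longrightarrow> 2 ^ e dvd n \<Longrightarrow> e = 0"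
  by (cases e) auto

lemma blocks_poly_cong_of_sign_1:
  fixes p :: int and x y :: nat
  assumes p: "prime p" and c: "1 \<le> c" "int c < p" and base: "const_mod (p ^ c) (block_poly p)"
    and e1: "p ^ e1 dvd int x" and e2: "p ^ e2 dvd int y" and e3: "p ^ e3 dvd int x + int y"
    and "y \<noteq> 0" and sign: "((-1) ^ nat (p - 1)) ^ y = (1::int)"
  shows "p ^ (c + e1 + e2 + e3)
    dvd poly (blocks_poly p y) (int x) - ((-1) ^ nat (p - 1)) ^ (x * y) * poly (blocks_poly p y) 0"
proof -
  have "nat p ^ e2 dvd y"
    using e2 prime_ge_2_int[OF p] by (simp flip: int_dvd_int_iff)
  then have "const_mod (p ^ (c + e2)) (blocks_poly p y)"
    by (rule const_mod_blocks_poly[OF p c base])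
  moreover have "poly (blocks_poly p y) (- int y) = poly (blocks_poly p y) 0"
    using poly_blocks_poly_reflect[of p y] sign by simp
  ultimately have "p ^ (c + e2) * int x * (int x + int y)
      dvd poly (blocks_poly p y) (int x) - poly (blocks_poly p y) 0"
    using \<open>y \<noteq> 0\<close> by (intro const_mod_dvd_poly_diff_of_reflect) auto
  moreover have "p ^ (c + e1 + e2 + e3) dvd p ^ (c + e2) * int x * (int x + int y)"
  proof -
    have "p ^ (c + e2) * p ^ e1 * p ^ e3 dvd p ^ (c + e2) * int x * (int x + int y)"
      using e1 e3 by (intro mult_dvd_mono) auto
    then show ?thesis by (simp add: power_add mult_ac)
  qed
  ultimately have "p ^ (c + e1 + e2 + e3) dvd poly (blocks_poly p y) (int x) - poly (blocks_poly p y) 0"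
    by (rule dvd_trans[rotated])
  moreover have "((-1) ^ nat (p - 1)) ^ (x * y) = (1::int)"
    using sign by (simp add: power_mult mult.commute[of x y])
  ultimately show ?thesis by simp
qed

lemma blocks_poly_cong_two:
  fixes x y :: nat
  assumes base: "const_mod (2 ^ c) (block_poly 2)"
    and e1: "2 ^ e1 dvd int x" and e2: "2 ^ e2 dvd int y" and e3: "2 ^ e3 dvd int x + int y"
    and "odd y"
  shows "2 ^ (c + e1 + e2 + e3)
    dvd poly (blocks_poly 2 y) (int x) - (- 1) ^ (x * y) * poly (blocks_poly 2 y) 0"
proof -
  define P where "P = blocks_poly 2 y"
  have const: "const_mod (2 ^ c) P"
    unfolding P_def blocks_poly_def using base by (auto intro!: const_mod_prod const_mod_pcompose_shift)
  have "e2 = 0" using two_power_dvd_odd[of "int y" e2] e2 \<open>odd y\<close> by simp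
  show ?thesis
  proof (cases "even x")
    case True
    have "e3 = 0" using two_power_dvd_odd[of "int x + int y" e3] e3 True \<open>odd y\<close> by simp
    have "2 ^ c * (int x - 0) dvd poly P (int x) - poly P 0"
      by (rule const_mod_dvd_poly_diff[OF const])
    moreover have "2 ^ (c + e1) dvd 2 ^ c * (int x - 0)"
      using e1 by (simp add: power_add mult_dvd_mono)
    ultimately show ?thesis
      using True \<open>e2 = 0\<close> \<open>e3 = 0\<close> unfolding P_def by (auto intro: dvd_trans)
  next
    case False
    have "e1 = 0" using two_power_dvd_odd[of "int x" e1] e1 False by simp
    have "2 ^ c * (int x - (- int y)) dvd poly P (int x) - poly P (- int y)"
      by (rule const_mod_dvd_poly_diff[OF const])
    moreover have "poly P (- int y) = - poly P 0"
      using poly_blocks_poly_reflect[of 2 y] \<open>odd y\<close> by (simp add: P_def)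
    moreover have "2 ^ (c + e3) dvd 2 ^ c * (int x + int y)"
      using e3 by (simp add: power_add mult_dvd_mono)
    ultimately show ?thesis
      using False \<open>odd y\<close> \<open>e1 = 0\<close> \<open>e2 = 0\<close> unfolding P_def by (auto intro: dvd_trans)
  qed
qed

lemma blocks_poly_cong:
  fixes p :: int and x y :: nat
  assumes p: "prime p" and c: "1 \<le> c" "int c < p" and base: "const_mod (p ^ c) (block_poly p)"
    and e: "p ^ e1 dvd int x" "p ^ e2 dvd int y" "p ^ e3 dvd int x + int y"
    and "y \<noteq> 0"
  shows "p ^ (c + e1 + e2 + e3)
    dvd poly (blocks_poly p y) (int x) - ((-1) ^ nat (p - 1)) ^ (x * y) * poly (blocks_poly p y) 0"
proof (cases "((-1) ^ nat (p - 1)) ^ y = (1::int)")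
  case True
  then show ?thesis by (rule blocks_poly_cong_of_sign_1[OF assms])
next
  case False
  moreover have "(-1) ^ nat (p - 1) = (1::int) \<or> (-1) ^ nat (p - 1) = (-1::int)"
    by (cases "even (nat (p - 1))") auto
  ultimately have "(-1) ^ nat (p - 1) = (-1::int)" "odd y"
    by (auto simp: neg_one_even_power)
  then have "odd (nat (p - 1))" "odd y"
    by (auto simp: neg_one_even_power)
  then have "p = 2"
    using prime_ge_2_int[OF p] prime_odd_int[OF p] by (force simp: even_nat_iff)
  then show ?thesis
    using blocks_poly_cong_two[of c e1 x e2 y e3] base e \<open>odd y\<close> by simp
qed

lemma coprime_fact_add_cong:
  fixes p :: int and x y :: nat
  assumes p: "prime p" and c: "1 \<le> c" "int c < p" and base: "const_mod (p ^ c) (block_poly p)"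
    and e1: "p ^ e1 dvd int x" and e2: "p ^ e2 dvd int y" and e3: "p ^ e3 dvd int x + int y"
  shows "p ^ (c + e1 + e2 + e3)
    dvd coprime_fact p (x + y) - ((-1) ^ nat (p - 1)) ^ (x * y) * coprime_fact p x * coprime_fact p y"
proof (cases "y = 0")
  case False
  then have "p ^ (c + e1 + e2 + e3) dvd coprime_fact p x *
      (poly (blocks_poly p y) (int x) - ((-1) ^ nat (p - 1)) ^ (x * y) * poly (blocks_poly p y) 0)"
    using blocks_poly_cong[OF assms] by simp
  then show ?thesis
    by (simp add: coprime_fact_add coprime_fact_eq_poly_blocks_poly[of p y] algebra_simps)
qed simp

section \<open>Binomial coefficients with integer arguments\<close>

lemma zbinom_nonneg: "0 \<le> b \<Longrightarrow> b \<le> a \<Longrightarrow> zbinom a b = int (nat a choose nat b)"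
  unfolding zbinom_def by simp

lemma zbinom_eq_0_nonneg: "0 \<le> a \<Longrightarrow> b < 0 \<or> a < b \<Longrightarrow> zbinom a b = 0"
  unfolding zbinom_def by auto

lemma zbinom_eq_0_neg: "a < b \<Longrightarrow> b < 0 \<Longrightarrow> zbinom a b = 0"
  unfolding zbinom_def by simp

lemma zbinom_neg_nonneg:
  "a < 0 \<Longrightarrow> 0 \<le> b \<Longrightarrow> zbinom a b = (-1) ^ nat b * int (nat (b - a - 1) choose nat b)"
  unfolding zbinom_def by simp

lemma zbinom_neg_le:
  "a < 0 \<Longrightarrow> b \<le> a \<Longrightarrow> zbinom a b = (-1) ^ nat (a - b) * int (nat (- b - 1) choose nat (a - b))"
  unfolding zbinom_def by simp

lemma zbinom_symmetric: "zbinom a b = zbinom a (a - b)"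
proof -
  consider "0 \<le> b" "b \<le> a" | "0 \<le> a" "b < 0 \<or> a < b" | "a < 0" "0 \<le> b \<or> b \<le> a" | "a < b" "b < 0"
    by linarith
  then show ?thesis
  proof cases
    case 1
    then have "nat (a - b) = nat a - nat b" "nat b \<le> nat a" by auto
    then show ?thesis using 1 binomial_symmetric[of "nat b" "nat a"] by (simp add: zbinom_nonneg)
  qed (auto simp: zbinom_eq_0_nonneg zbinom_neg_nonneg zbinom_neg_le zbinom_eq_0_neg)
qed

lemma zbinom_absorption_nonneg:
  assumes "0 \<le> a"
  shows "b * zbinom a b = a * zbinom (a - 1) (b - 1)"
proof (cases "1 \<le> b \<and> b \<le> a")
  case True
  define k n where "k = nat (b - 1)" and "n = nat (a - 1)"
  then have kn: "b = int (Suc k)" "a = int (Suc n)" "k \<le> n" using True by auto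
  have "int (Suc k) * int (Suc n choose Suc k) = int (Suc n) * int (n choose k)"
    using Suc_times_binomial[of k n] by (metis of_nat_mult)
  moreover have "zbinom a b = int (Suc n choose Suc k)"
    using kn by (simp add: zbinom_nonneg del: of_nat_Suc)
  moreover have "zbinom (a - 1) (b - 1) = int (n choose k)"
    using kn by (simp add: zbinom_nonneg)
  ultimately show ?thesis using kn by (simp only:)
next
  case False
  then consider "b \<le> 0" | "a < b" by linarith
  then show ?thesis
  proof cases
    case 1
    then show ?thesis using assms by (cases "b = 0"; cases "a = 0") (auto simp: zbinom_eq_0_nonneg)
  next
    case 2
    then show ?thesis using assms by (cases "a = 0") (auto simp: zbinom_eq_0_nonneg)
  qed
qed

lemma zbinom_absorption_neg:
  assumes a: "a < 0"
  shows "b * zbinom a b = a * zbinom (a - 1) (b - 1)"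
proof -
  consider "1 \<le> b" | "b = 0" | "b < 0" "b \<le> a" | "a < b" "b < 0" by linarith
  then show ?thesis
  proof cases
    case 1
    define k N where "k = nat (b - 1)" and "N = nat (b - a - 1)"
    have b: "b = int (Suc k)" and N: "nat (b - 1 - (a - 1) - 1) = N" and kN: "N - k = nat (- a)"
      using a 1 by (auto simp: k_def N_def)
    have "int (Suc k * (N choose Suc k)) = int ((N - k) * (N choose k))"
      using binomial_absorption[of k N] binomial_absorb_comp[of N k] by simp
    then have e: "int (Suc k) * int (N choose Suc k) = (- a) * int (N choose k)"
      using kN a by (simp add: algebra_simps)
    have "nat b = Suc k" using b by simp
    then have "zbinom a b = (-1) ^ Suc k * int (N choose Suc k)"
      using zbinom_neg_nonneg[OF a, of b] 1 unfolding N_def by simp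
    then have "b * zbinom a b = (-1) ^ Suc k * (int (Suc k) * int (N choose Suc k))"
      using b by (simp only: mult.left_commute)
    also have "\<dots> = a * ((-1) ^ k * int (N choose k))"
      using e by simp
    also have "(-1) ^ k * int (N choose k) = zbinom (a - 1) (b - 1)"
      using a 1 N by (simp add: zbinom_neg_nonneg k_def)
    finally show ?thesis .
  next
    case 3
    define n k where "n = nat (- b)" and "k = nat (a - b)"
    have "int (n - k) * int (n choose k) = int n * int ((n - 1) choose k)"
      by (metis binomial_absorb_comp of_nat_mult)
    moreover have "int (n - k) = - a" "int n = - b" using 3 a by (auto simp: n_def k_def)
    ultimately show ?thesis
      using 3 a by (simp add: zbinom_neg_le n_def k_def nat_diff_distrib algebra_simps)
  qed (use a in \<open>simp_all add: zbinom_eq_0_neg\<close>)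
qed

lemma zbinom_absorption: "b * zbinom a b = a * zbinom (a - 1) (b - 1)"
  using zbinom_absorption_nonneg zbinom_absorption_neg by (cases "0 \<le> a") auto

lemma binomial_prime_mult_coprime_fact:
  fixes p :: int
  assumes "p \<ge> 2"
  shows "int (nat p * (x + y) choose (nat p * x)) * coprime_fact p x * coprime_fact p y
       = int ((x + y) choose x) * coprime_fact p (x + y)"
proof -
  define q where "q = nat p"
  have "fact (q * x) * fact (q * y) * (q * (x + y) choose (q * x)) = fact (q * (x + y))"
    using binomial_fact_lemma[of "q * x" "q * (x + y)"] by (simp add: algebra_simps)
  then have big: "fact (q * x) * fact (q * y) * int (q * (x + y) choose (q * x)) = (fact (q * (x + y)) :: int)"
    by (metis of_nat_fact of_nat_mult)
  have "fact x * fact y * ((x + y) choose x) = fact (x + y)"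
    using binomial_fact_lemma[of x "x + y"] by simp
  then have small: "fact x * fact y * int ((x + y) choose x) = (fact (x + y) :: int)"
    by (metis of_nat_fact of_nat_mult)
  have "(p ^ (x + y) * fact x * fact y) * (int (q * (x + y) choose (q * x)) * coprime_fact p x * coprime_fact p y)
      = fact (q * x) * fact (q * y) * int (q * (x + y) choose (q * x))"
    using fact_mult_prime[OF assms, of x] fact_mult_prime[OF assms, of y]
    by (simp add: q_def power_add ac_simps)
  also have "\<dots> = p ^ (x + y) * fact (x + y) * coprime_fact p (x + y)"
    using big fact_mult_prime[OF assms, of "x + y"] by (simp add: q_def)
  also have "\<dots> = (p ^ (x + y) * fact x * fact y) * (int ((x + y) choose x) * coprime_fact p (x + y))"
    by (simp flip: small add: ac_simps)
  finally show ?thesis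
    using assms unfolding q_def by (simp only: mult_cancel_left) simp
qed

lemma binomial_prime_mult_minus_1_coprime_fact:
  fixes p :: int
  assumes "p \<ge> 2" and "0 < x + y"
  shows "int ((nat p * (x + y) - 1) choose (nat p * x)) * coprime_fact p x * coprime_fact p y
       = int ((x + y - 1) choose x) * coprime_fact p (x + y)"
proof -
  define q m where "q = nat p" and "m = x + y"
  have "q * m \<noteq> 0" using assms by (simp add: q_def m_def)
  have "q * m - q * x = q * y" "m - x = y" by (auto simp: m_def algebra_simps)
  then have "q * y * (q * m choose (q * x)) = q * m * ((q * m - 1) choose (q * x))"
    "y * (m choose x) = m * ((m - 1) choose x)"
    using binomial_absorb_comp[of "q * m" "q * x"] binomial_absorb_comp[of m x] by simp_all
  then have A1: "int (q * y) * int (q * m choose (q * x)) = int (q * m) * int ((q * m - 1) choose (q * x))"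
    and A2: "int y * int (m choose x) = int m * int ((m - 1) choose x)"
    by (simp_all only: flip: of_nat_mult)
  have "int (q * m) * (int ((q * m - 1) choose (q * x)) * coprime_fact p x * coprime_fact p y)
      = (int (q * m) * int ((q * m - 1) choose (q * x))) * (coprime_fact p x * coprime_fact p y)"
    by (simp only: mult.assoc)
  also have "\<dots> = int (q * y) * (int (q * m choose (q * x)) * coprime_fact p x * coprime_fact p y)"
    by (simp only: A1[symmetric] mult.assoc)
  also have "\<dots> = int (q * y) * (int (m choose x) * coprime_fact p m)"
    using binomial_prime_mult_coprime_fact[OF assms(1), of x y] by (simp add: q_def m_def)
  also have "\<dots> = int q * (int y * int (m choose x)) * coprime_fact p m"
    by (simp only: of_nat_mult mult.assoc)
  also have "\<dots> = int (q * m) * (int ((m - 1) choose x) * coprime_fact p m)"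
    by (simp only: A2 of_nat_mult mult.assoc)
  finally have "int (q * m) * (int ((q * m - 1) choose (q * x)) * coprime_fact p x * coprime_fact p y)
      = int (q * m) * (int ((m - 1) choose x) * coprime_fact p m)" .
  then show ?thesis
    using \<open>q * m \<noteq> 0\<close> unfolding q_def m_def by (simp only: mult_cancel_left of_nat_eq_0_iff) simp
qed

section \<open>Congruences between ratios of binomial coefficients\<close>

text \<open>In the localisation of the integers at p: X = Y N / D with D a unit and N = s D modulo M,
  that is, X / Y = s (mod M) if Y is nonzero.\<close>

definition ratio_cong :: "int \<Rightarrow> int \<Rightarrow> int \<Rightarrow> int \<Rightarrow> int \<Rightarrow> bool" where
  "ratio_cong p M X Y s \<longleftrightarrow> (\<exists>N D. X * D = Y * N \<and> \<not> p dvd D \<and> M dvd N - s * D)"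

lemma ratio_cong_dvd: "ratio_cong p M X Y s \<Longrightarrow> M' dvd M \<Longrightarrow> ratio_cong p M' X Y s"
  unfolding ratio_cong_def using dvd_trans by blast

lemma ratio_cong_zero: "prime p \<Longrightarrow> ratio_cong p M 0 0 s"
  unfolding ratio_cong_def by (rule exI[of _ s], rule exI[of _ 1]) (auto dest: prime_gt_1_int)

lemma ratio_cong_one: "prime p \<Longrightarrow> ratio_cong p M 1 1 1"
  unfolding ratio_cong_def by (rule exI[of _ 1], rule exI[of _ 1]) (auto dest: prime_gt_1_int)

lemma ratio_cong_mult:
  assumes "prime p" "ratio_cong p M X Y s" "ratio_cong p M X' Y' s'"
  shows "ratio_cong p M (X * X') (Y * Y') (s * s')"
proof -
  obtain N D N' D' where ND: "X * D = Y * N" "\<not> p dvd D" "M dvd N - s * D"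
    and ND': "X' * D' = Y' * N'" "\<not> p dvd D'" "M dvd N' - s' * D'"
    using assms(2,3) unfolding ratio_cong_def by blast
  have "N * N' - s * s' * (D * D') = N' * (N - s * D) + s * D * (N' - s' * D')"
    by (simp add: algebra_simps)
  then have "M dvd N * N' - s * s' * (D * D')"
    using ND(3) ND'(3) by simp
  moreover have "X * X' * (D * D') = Y * Y' * (N * N')"
    using ND(1) ND'(1) by (metis mult.assoc mult.left_commute)
  moreover have "\<not> p dvd D * D'"
    using ND(2) ND'(2) assms(1) by (simp add: prime_dvd_mult_iff)
  ultimately show ?thesis
    unfolding ratio_cong_def by blast
qed

lemma ratio_cong_prod:
  assumes "prime p" "\<And>i. i \<in> I \<Longrightarrow> ratio_cong p M (X i) (Y i) (s i)"
  shows "ratio_cong p M (\<Prod>i\<in>I. X i) (\<Prod>i\<in>I. Y i) (\<Prod>i\<in>I. s i)"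
  using assms(2)
proof (induction I rule: infinite_finite_induct)
  case (insert x F)
  then show ?case by (simp add: ratio_cong_mult[OF assms(1)])
qed (simp_all add: ratio_cong_one[OF assms(1)])

lemma pow_dvd_diff_of_ratio_cong:
  fixes p X Y :: int
  assumes p: "prime p" and "ratio_cong p (p ^ E) X Y s" and "p ^ w dvd Y" and "T \<le> w + E"
    and s: "s = 1 \<or> (s = -1 \<and> p ^ T dvd 2 * Y)"
  shows "p ^ T dvd X - Y"
proof -
  obtain N D where ND: "X * D = Y * N" "\<not> p dvd D" "p ^ E dvd N - s * D"
    using assms(2) unfolding ratio_cong_def by blast
  have "D * (X - Y) = Y * (N - s * D) + (s - 1) * Y * D"
    using ND(1) by (simp add: algebra_simps)
  moreover have "p ^ T dvd Y * (N - s * D)"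
    using mult_dvd_mono[OF \<open>p ^ w dvd Y\<close> ND(3)] le_imp_power_dvd[OF \<open>T \<le> w + E\<close>, of p]
    by (simp add: power_add dvd_trans)
  moreover have "p ^ T dvd (s - 1) * Y * D"
    using s by (auto simp: mult.assoc[symmetric])
  ultimately have "p ^ T dvd D * (X - Y)" by simp
  moreover have "coprime (p ^ T) D"
    using prime_imp_coprime[OF p ND(2)] by simp
  ultimately show ?thesis by (simp add: coprime_dvd_mult_right_iff)
qed

text \<open>The sign (-1)^((p - 1) b (a - b)) of the congruence between binom(pa, pb) and binom(a, b).\<close>

definition binom_sign :: "int \<Rightarrow> int \<Rightarrow> int \<Rightarrow> int" where
  "binom_sign p a b = (if even p \<and> odd (b * (a - b)) then -1 else 1)"

lemma neg_one_power_pred: "(p::int) \<ge> 2 \<Longrightarrow> (-1) ^ nat (p - 1) = (if even p then -1 else 1 :: int)"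
  by (simp add: even_nat_iff)

lemma ratio_cong_zbinom_nonneg:
  fixes p :: int and x y :: nat
  assumes p: "prime p" and c: "1 \<le> c" "int c < p" and base: "const_mod (p ^ c) (block_poly p)"
    and "p ^ e1 dvd int x + int y" "p ^ e2 dvd int x" "p ^ e3 dvd int y"
  shows "ratio_cong p (p ^ (c + e1 + e2 + e3)) (zbinom (p * (int x + int y)) (p * int x))
    (zbinom (int x + int y) (int x)) (binom_sign p (int x + int y) (int x))"
proof -
  have p2: "p \<ge> 2" using p prime_ge_2_int by blast
  have "zbinom (p * (int x + int y)) (p * int x) = int (nat p * (x + y) choose (nat p * x))"
    using p2 by (simp add: zbinom_nonneg mult_left_mono nat_mult_distrib flip: of_nat_add)
  moreover have "zbinom (int x + int y) (int x) = int ((x + y) choose x)"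
    by (simp add: zbinom_nonneg nat_add_distrib)
  moreover have "binom_sign p (int x + int y) (int x) = ((-1) ^ nat (p - 1)) ^ (x * y)"
    using p2 by (simp add: binom_sign_def neg_one_power_pred)
  moreover have "p ^ (c + e2 + e3 + e1) dvd coprime_fact p (x + y)
      - ((-1) ^ nat (p - 1)) ^ (x * y) * coprime_fact p x * coprime_fact p y"
    using assms by (intro coprime_fact_add_cong) auto
  ultimately show ?thesis
    unfolding ratio_cong_def
    using binomial_prime_mult_coprime_fact[OF p2, of x y] prime_not_dvd_coprime_fact[OF p]
    by (intro exI[of _ "coprime_fact p (x + y)"] exI[of _ "coprime_fact p x * coprime_fact p y"])
      (auto simp: ac_simps prime_dvd_mult_iff[OF p])
qed

lemma zbinom_prime_mult_neg:
  fixes p :: int and x y :: nat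
  assumes "p \<ge> 2" "0 < y"
  shows "zbinom (p * - int y) (p * int x) = (-1) ^ (nat p * x) * int ((nat p * (x + y) - 1) choose (nat p * x))"
proof -
  have "1 \<le> nat p * (x + y)"
    using assms by (simp add: Suc_le_eq)
  then have "int (nat p * (x + y) - 1) = p * int x - p * - int y - 1"
    using assms by (simp add: of_nat_diff algebra_simps)
  then have "nat (p * int x - p * - int y - 1) = nat p * (x + y) - 1"
    by (metis nat_int)
  moreover have "p * - int y < 0"
    using assms by (simp add: mult_pos_neg)
  ultimately show ?thesis
    using assms by (simp add: zbinom_neg_nonneg nat_mult_distrib)
qed

lemma zbinom_neg_nat:
  fixes x y :: nat
  assumes "0 < y"
  shows "zbinom (- int y) (int x) = (-1) ^ x * int ((x + y - 1) choose x)"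
proof -
  have "int (x + y - 1) = int x - - int y - 1"
    using assms by (simp add: of_nat_diff)
  then have "nat (int x - - int y - 1) = x + y - 1"
    by (metis nat_int)
  then show ?thesis
    using assms by (simp add: zbinom_neg_nonneg)
qed

lemma binom_sign_neg_nat:
  fixes p :: int and x y :: nat
  assumes "p \<ge> 2"
  shows "binom_sign p (- int y) (int x) = (-1) ^ (nat p * x + x) * ((-1) ^ nat (p - 1)) ^ (x * y)"
proof (cases "even p")
  case True
  then have "even (nat p)" using assms by (simp add: even_nat_iff)
  have "int x * (- int y - int x) = - int (x * x + x * y)" by (simp add: algebra_simps)
  then have "odd (int x * (- int y - int x)) \<longleftrightarrow> odd (nat p * x + x + x * y)"
    using \<open>even (nat p)\<close> by (cases "even x") auto
  then show ?thesis
    using True assms \<open>even (nat p)\<close>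
    by (simp add: binom_sign_def neg_one_power_pred power_add[symmetric] flip: power_mult)
next
  case False
  then have "odd (nat p)" using assms by (simp add: even_nat_iff)
  then show ?thesis
    using False assms by (simp add: binom_sign_def neg_one_power_pred)
qed

lemma ratio_cong_zbinom_neg:
  fixes p :: int and x y :: nat
  assumes p: "prime p" and c: "1 \<le> c" "int c < p" and base: "const_mod (p ^ c) (block_poly p)"
    and "0 < y" and "p ^ e1 dvd int y" "p ^ e2 dvd int x" "p ^ e3 dvd int x + int y"
  shows "ratio_cong p (p ^ (c + e1 + e2 + e3)) (zbinom (p * - int y) (p * int x))
    (zbinom (- int y) (int x)) (binom_sign p (- int y) (int x))"
proof -
  define \<epsilon> :: int where "\<epsilon> = ((-1) ^ nat (p - 1)) ^ (x * y)"
  define \<sigma> :: int where "\<sigma> = (-1) ^ (nat p * x + x)"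
  have p2: "p \<ge> 2" using p prime_ge_2_int by blast
  have "p ^ (c + e2 + e1 + e3) dvd coprime_fact p (x + y) - \<epsilon> * coprime_fact p x * coprime_fact p y"
    unfolding \<epsilon>_def using assms by (intro coprime_fact_add_cong) auto
  moreover have "c + e2 + e1 + e3 = c + e1 + e2 + e3" by simp
  moreover have "\<sigma> * coprime_fact p (x + y) - \<sigma> * \<epsilon> * (coprime_fact p x * coprime_fact p y)
      = \<sigma> * (coprime_fact p (x + y) - \<epsilon> * coprime_fact p x * coprime_fact p y)"
    by (simp add: algebra_simps)
  ultimately have J: "p ^ (c + e1 + e2 + e3)
      dvd \<sigma> * coprime_fact p (x + y) - \<sigma> * \<epsilon> * (coprime_fact p x * coprime_fact p y)"
    by (simp only: dvd_mult)
  have "0 < x + y" using \<open>0 < y\<close> by simp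
  have "zbinom (p * - int y) (p * int x) * (coprime_fact p x * coprime_fact p y)
      = (-1) ^ (nat p * x) * (int ((x + y - 1) choose x) * coprime_fact p (x + y))"
    using zbinom_prime_mult_neg[OF p2 \<open>0 < y\<close>] binomial_prime_mult_minus_1_coprime_fact[OF p2 \<open>0 < x + y\<close>]
    by (simp add: ac_simps)
  also have "\<dots> = zbinom (- int y) (int x) * (\<sigma> * coprime_fact p (x + y))"
    by (simp add: zbinom_neg_nat[OF \<open>0 < y\<close>] \<sigma>_def power_add ac_simps flip: power_add[of "-1::int" x x])
  finally show ?thesis
    unfolding ratio_cong_def binom_sign_neg_nat[OF p2] \<sigma>_def[symmetric] \<epsilon>_def[symmetric]
    using J prime_not_dvd_coprime_fact[OF p] prime_dvd_mult_iff[OF p] by blast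
qed

lemma ratio_cong_zbinom_lower_nonneg:
  fixes p a b :: int
  assumes p: "prime p" and c: "1 \<le> c" "int c < p" and base: "const_mod (p ^ c) (block_poly p)"
    and e: "p ^ e1 dvd a" "p ^ e2 dvd b" "p ^ e3 dvd a - b" and "0 \<le> b"
  shows "ratio_cong p (p ^ (c + e1 + e2 + e3)) (zbinom (p * a) (p * b)) (zbinom a b) (binom_sign p a b)"
proof -
  have p2: "p \<ge> 2" using p prime_ge_2_int by blast
  consider "b \<le> a" | "a < 0" | "0 \<le> a" "a < b" by linarith
  then show ?thesis
  proof cases
    case 1
    define x y where "x = nat b" and "y = nat (a - b)"
    have "a = int x + int y" "b = int x"
      using 1 \<open>0 \<le> b\<close> by (simp_all add: x_def y_def)
    then show ?thesis
      using ratio_cong_zbinom_nonneg[OF p c base, of e1 x y e2 e3] e by simp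
  next
    case 2
    define x y where "x = nat b" and "y = nat (- a)"
    have "a = - int y" "b = int x" "0 < y"
      using 2 \<open>0 \<le> b\<close> by (simp_all add: x_def y_def)
    moreover have "p ^ e3 dvd int x + int y"
    proof -
      have "int x + int y = - (a - b)" using calculation by simp
      then show ?thesis using e(3) by (simp add: dvd_diff_commute[of _ a b])
    qed
    ultimately show ?thesis
      using ratio_cong_zbinom_neg[OF p c base, of y e1 e2 x e3] e by simp
  next
    case 3
    then have "zbinom a b = 0" "zbinom (p * a) (p * b) = 0"
      using p2 by (auto intro!: zbinom_eq_0_nonneg)
    then show ?thesis
      using ratio_cong_zero[OF p] by simp
  qed
qed

lemma binom_sign_symmetric: "binom_sign p a (a - b) = binom_sign p a b"
  unfolding binom_sign_def by (simp add: mult.commute)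

lemma ratio_cong_zbinom:
  fixes p a b :: int
  assumes p: "prime p" and c: "1 \<le> c" "int c < p" and base: "const_mod (p ^ c) (block_poly p)"
    and e: "p ^ e1 dvd a" "p ^ e2 dvd b" "p ^ e3 dvd a - b"
  shows "ratio_cong p (p ^ (c + e1 + e2 + e3)) (zbinom (p * a) (p * b)) (zbinom a b) (binom_sign p a b)"
proof -
  have p2: "p \<ge> 2" using p prime_ge_2_int by blast
  consider "0 \<le> b" | "b \<le> a" "a < 0" | "b < 0" "0 \<le> a \<or> a < b" by linarith
  then show ?thesis
  proof cases
    case 1
    then show ?thesis by (rule ratio_cong_zbinom_lower_nonneg[OF p c base e])
  next
    case 2
    have "ratio_cong p (p ^ (c + e1 + e3 + e2)) (zbinom (p * a) (p * (a - b))) (zbinom a (a - b))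
        (binom_sign p a (a - b))"
      using 2 e by (intro ratio_cong_zbinom_lower_nonneg[OF p c base]) auto
    moreover have "zbinom (p * a) (p * (a - b)) = zbinom (p * a) (p * b)"
      using zbinom_symmetric[of "p * a" "p * b"] by (simp add: algebra_simps)
    ultimately show ?thesis
      by (simp add: binom_sign_symmetric ac_simps flip: zbinom_symmetric)
  next
    case 3
    then have "zbinom a b = 0" "zbinom (p * a) (p * b) = 0"
      using p2 by (auto simp: zbinom_eq_0_nonneg zbinom_eq_0_neg mult_less_cancel_left mult_pos_neg)
    then show ?thesis
      using ratio_cong_zero[OF p] by simp
  qed
qed

section \<open>The blocks of A_lam\<close>

definition lam_block :: "nat list \<Rightarrow> 'a list \<Rightarrow> nat \<Rightarrow> 'a list" where
  "lam_block lam ms j = take (lam ! j) (drop (sum_list (take j lam)) ms)"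

definition multinom_top :: "int list \<Rightarrow> int \<Rightarrow> nat \<Rightarrow> int" where
  "multinom_top ms k i = sum_list (take (Suc i) ms) - int i * k"

definition multinom_bot :: "int list \<Rightarrow> int \<Rightarrow> nat \<Rightarrow> int" where
  "multinom_bot ms k i = ms ! i - k"

lemma length_lam_block:
  assumes "length ms = sum_list lam" "j < length lam"
  shows "length (lam_block lam ms j) = lam ! j"
proof -
  have "sum_list (take j lam) + lam ! j = sum_list (take (Suc j) lam)"
    using assms(2) by (simp add: take_Suc_conv_app_nth)
  also have "\<dots> \<le> sum_list lam"
    by (metis append_take_drop_id le_add1 sum_list_append)
  finally show ?thesis unfolding lam_block_def using assms(1) by simp
qed

lemma lam_block_map: "lam_block lam (map f ms) j = map f (lam_block lam ms j)"
  unfolding lam_block_def by (simp add: take_map drop_map)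

lemma ball_set_lam_block: "\<forall>x\<in>set ms. P x \<Longrightarrow> \<forall>x\<in>set (lam_block lam ms j). P x"
  unfolding lam_block_def by (meson in_set_takeD in_set_dropD)

lemma A_lam_eq_prod: "A_lam lam ms k = (\<Prod>j<length lam. zmultinom (lam_block lam ms j) k)"
  unfolding A_lam_def lam_block_def ..

lemma zmultinom_eq_prod:
  "zmultinom ms k = (\<Prod>i<length ms. zbinom (multinom_top ms k i) (multinom_bot ms k i))"
  unfolding zmultinom_def multinom_top_def multinom_bot_def ..

lemma zmultinom_scaled:
  "zmultinom (map (\<lambda>x. p * x) ms) (p * k)
    = (\<Prod>i<length ms. zbinom (p * multinom_top ms k i) (p * multinom_bot ms k i))"
  unfolding zmultinom_def multinom_top_def multinom_bot_def
  by (rule prod.cong) (auto simp: take_map sum_list_const_mult algebra_simps)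

lemma dvd_sum_list: "(\<And>x. x \<in> set xs \<Longrightarrow> d dvd x) \<Longrightarrow> (d::'a::comm_semiring_1) dvd sum_list xs"
  by (induction xs) auto

lemma pow_dvd_multinom_entries:
  fixes p :: int
  assumes "\<forall>x\<in>set ms. p ^ t dvd x" and "p ^ t dvd k" and "i < length ms"
  shows "p ^ t dvd multinom_top ms k i" "p ^ t dvd multinom_bot ms k i"
    "p ^ t dvd multinom_top ms k i - multinom_bot ms k i"
proof -
  have "p ^ t dvd sum_list (take (Suc i) ms)"
    using assms(1) by (intro dvd_sum_list) (auto dest: in_set_takeD)
  then show top: "p ^ t dvd multinom_top ms k i"
    unfolding multinom_top_def using assms(2) by simp
  show bot: "p ^ t dvd multinom_bot ms k i"
    unfolding multinom_bot_def using assms by simp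
  show "p ^ t dvd multinom_top ms k i - multinom_bot ms k i"
    using top bot by simp
qed

lemma multinom_top_0: "ms \<noteq> [] \<Longrightarrow> multinom_top ms k 0 = ms ! 0"
  unfolding multinom_top_def by (cases ms) auto

lemma multinom_top_minus_bot:
  "i < length ms \<Longrightarrow> multinom_top ms k i - multinom_bot ms k i = sum_list (take i ms) - int i * k + k"
  unfolding multinom_top_def multinom_bot_def by (simp add: take_Suc_conv_app_nth)

lemma prime_power_dvd_cancel:
  fixes p b z :: int
  assumes p: "prime p" and "p ^ (t + u) dvd b * z" "p ^ t dvd b" "\<not> p ^ Suc t dvd b"
  shows "p ^ u dvd z"
proof -
  obtain b' where b': "b = p ^ t * b'" using \<open>p ^ t dvd b\<close> by (rule dvdE)
  then have "\<not> p dvd b'" using \<open>\<not> p ^ Suc t dvd b\<close> by (auto simp: mult.commute)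
  then have "coprime (p ^ u) b'" using p by (simp add: prime_imp_coprime)
  moreover have "p ^ u dvd b' * z"
    using \<open>p ^ (t + u) dvd b * z\<close> p by (simp add: b' power_add mult.assoc prime_gt_0_int)
  ultimately show ?thesis by (simp add: coprime_dvd_mult_right_iff)
qed

lemma pow_dvd_zbinom_diff:
  fixes p m k :: int
  assumes p: "prime p" and m: "p ^ R dvd m" and "t < R" and k: "p ^ t dvd k" "\<not> p ^ Suc t dvd k"
  shows "p ^ (R - t) dvd zbinom m (m - k)"
proof (rule prime_power_dvd_cancel[OF p])
  have "p ^ t dvd p ^ R" "p ^ Suc t dvd p ^ R"
    using \<open>t < R\<close> by (intro le_imp_power_dvd; simp)+
  then have "p ^ t dvd m" "p ^ Suc t dvd m"
    using m dvd_trans by blast+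
  then show "p ^ t dvd m - k" "\<not> p ^ Suc t dvd m - k"
    using k by (auto simp: dvd_diff dvd_diff_right_iff)
  show "p ^ (t + (R - t)) dvd (m - k) * zbinom m (m - k)"
    unfolding zbinom_absorption using \<open>t < R\<close> m by simp
qed

lemma zbinom_first_dvd_zmultinom:
  "ms \<noteq> [] \<Longrightarrow> zbinom (multinom_top ms k 0) (multinom_bot ms k 0) dvd zmultinom ms k"
  unfolding zmultinom_eq_prod by (intro dvd_prodI) auto

lemma pow_dvd_zbinom_first:
  fixes p k :: int
  assumes p: "prime p" and "ms \<noteq> []" "\<forall>x\<in>set ms. p ^ R dvd x"
    and "t < R" "p ^ t dvd k" "\<not> p ^ Suc t dvd k"
  shows "p ^ (R - t) dvd zbinom (multinom_top ms k 0) (multinom_bot ms k 0)"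
proof -
  have "ms ! 0 \<in> set ms" using \<open>ms \<noteq> []\<close> by simp
  then have "p ^ R dvd ms ! 0" using assms(3) by blast
  then show ?thesis
    using pow_dvd_zbinom_diff[OF p _ assms(4-6)] \<open>ms \<noteq> []\<close> by (simp add: multinom_top_0 multinom_bot_def)
qed

lemma pow_dvd_zmultinom:
  fixes p k :: int
  assumes p: "prime p" and "ms \<noteq> []" "\<forall>x\<in>set ms. p ^ R dvd x"
    and "t < R" "p ^ t dvd k" "\<not> p ^ Suc t dvd k"
  shows "p ^ (R - t) dvd zmultinom ms k"
  using pow_dvd_zbinom_first[OF assms] zbinom_first_dvd_zmultinom[OF assms(2)] by (rule dvd_trans)

lemma lam_block_ne_Nil:
  assumes "\<forall>x\<in>set lam. x > 0" "length ms = sum_list lam" "j < length lam"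
  shows "lam_block lam ms j \<noteq> []"
proof -
  have "0 < lam ! j" using assms(1,3) by simp
  then show ?thesis using length_lam_block[OF assms(2,3)] by auto
qed

lemma prod_dvd_A_lam:
  assumes "S \<subseteq> {..<length lam}" "\<And>j. j \<in> S \<Longrightarrow> d j dvd zmultinom (lam_block lam ms j) k"
  shows "(\<Prod>j\<in>S. d j) dvd A_lam lam ms k"
proof -
  have "(\<Prod>j\<in>S. d j) dvd (\<Prod>j\<in>S. zmultinom (lam_block lam ms j) k)"
    using assms(2) by (rule prod_dvd_prod)
  also have "\<dots> dvd A_lam lam ms k"
    unfolding A_lam_eq_prod using assms(1) by (intro prod_dvd_prod_subset) auto
  finally show ?thesis .
qed

text \<open>This is where A_lam needs at least two blocks.\<close>

lemma pow_dvd_A_lam: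
  fixes p k :: int
  assumes p: "prime p" and "length lam \<ge> 2" and pos: "\<forall>x\<in>set lam. x > 0"
    and len: "length ms = sum_list lam" and "\<forall>x\<in>set ms. p ^ R dvd x"
    and t: "t < R" "p ^ t dvd k" "\<not> p ^ Suc t dvd k"
  shows "p ^ (2 * (R - t)) dvd A_lam lam ms k"
proof -
  have "(\<Prod>j\<in>{0, 1::nat}. p ^ (R - t)) dvd A_lam lam ms k"
  proof (rule prod_dvd_A_lam)
    show "{0, 1} \<subseteq> {..<length lam}" using \<open>length lam \<ge> 2\<close> by auto
    fix j assume "j \<in> {0, 1::nat}"
    then have "j < length lam" using \<open>length lam \<ge> 2\<close> by auto
    then show "p ^ (R - t) dvd zmultinom (lam_block lam ms j) k"
      using assms(5) by (intro pow_dvd_zmultinom[OF p _ _ t] lam_block_ne_Nil[OF pos len] ball_set_lam_block)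
  qed
  then show ?thesis
    by (simp add: mult_2 power_add)
qed

definition multinom_sign :: "int \<Rightarrow> int list \<Rightarrow> int \<Rightarrow> int" where
  "multinom_sign p ms k = (\<Prod>i<length ms. binom_sign p (multinom_top ms k i) (multinom_bot ms k i))"

definition A_lam_sign :: "int \<Rightarrow> nat list \<Rightarrow> int list \<Rightarrow> int \<Rightarrow> int" where
  "A_lam_sign p lam ms k = (\<Prod>j<length lam. multinom_sign p (lam_block lam ms j) k)"

lemma ratio_cong_zmultinom:
  assumes p: "prime p" and c: "1 \<le> c" "int c < p" and base: "const_mod (p ^ c) (block_poly p)"
    and "\<And>i. i < length ms \<Longrightarrow> \<exists>e1 e2 e3. E \<le> c + e1 + e2 + e3 \<and> p ^ e1 dvd multinom_top ms k i
      \<and> p ^ e2 dvd multinom_bot ms k i \<and> p ^ e3 dvd multinom_top ms k i - multinom_bot ms k i"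
  shows "ratio_cong p (p ^ E) (zmultinom (map (\<lambda>x. p * x) ms) (p * k)) (zmultinom ms k) (multinom_sign p ms k)"
  unfolding zmultinom_scaled unfolding zmultinom_eq_prod multinom_sign_def
proof (intro ratio_cong_prod[OF p])
  fix i assume "i \<in> {..<length ms}"
  then obtain e1 e2 e3 where "E \<le> c + e1 + e2 + e3" "p ^ e1 dvd multinom_top ms k i"
    "p ^ e2 dvd multinom_bot ms k i" "p ^ e3 dvd multinom_top ms k i - multinom_bot ms k i"
    using assms(5) by blast
  then show "ratio_cong p (p ^ E) (zbinom (p * multinom_top ms k i) (p * multinom_bot ms k i))
      (zbinom (multinom_top ms k i) (multinom_bot ms k i))
      (binom_sign p (multinom_top ms k i) (multinom_bot ms k i))"
    by (intro ratio_cong_dvd[OF ratio_cong_zbinom[OF p c base]] le_imp_power_dvd)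
qed

lemma ratio_cong_A_lam:
  assumes p: "prime p"
    and "\<And>j. j < length lam \<Longrightarrow> ratio_cong p M (zmultinom (map (\<lambda>x. p * x) (lam_block lam ms j)) (p * k))
      (zmultinom (lam_block lam ms j) k) (multinom_sign p (lam_block lam ms j) k)"
  shows "ratio_cong p M (A_lam lam (map (\<lambda>x. p * x) ms) (p * k)) (A_lam lam ms k) (A_lam_sign p lam ms k)"
  unfolding A_lam_eq_prod A_lam_sign_def lam_block_map using assms by (intro ratio_cong_prod) auto

lemma exists_exact_pow_dvd:
  fixes p k :: int
  shows "\<exists>t\<le>R. p ^ t dvd k \<and> (t < R \<longrightarrow> \<not> p ^ Suc t dvd k)"
proof (induction R)
  case (Suc R)
  then obtain t where t: "t \<le> R" "p ^ t dvd k" "t < R \<longrightarrow> \<not> p ^ Suc t dvd k" by blast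
  show ?case
  proof (cases "t = R \<and> p ^ Suc R dvd k")
    case True
    then show ?thesis by (intro exI[of _ "Suc R"]) auto
  next
    case False
    then show ?thesis using t by (intro exI[of _ t]) auto
  qed
qed simp

lemma A_lam_scaled_cong:
  fixes p k :: int
  assumes p: "prime p" and "length lam \<ge> 2" and "\<forall>x\<in>set lam. x > 0"
    and "length ms = sum_list lam" and "\<forall>x\<in>set ms. p ^ R dvd x"
    and t: "t \<le> R" "p ^ t dvd k" "t < R \<longrightarrow> \<not> p ^ Suc t dvd k"
    and cong: "ratio_cong p (p ^ E) (A_lam lam (map (\<lambda>x. p * x) ms) (p * k)) (A_lam lam ms k) \<sigma>"
    and "T \<le> 2 * (R - t) + E"
    and "\<sigma> = 1 \<or> (\<sigma> = -1 \<and> p ^ T dvd 2 * A_lam lam ms k)"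
  shows "p ^ T dvd A_lam lam (map (\<lambda>x. p * x) ms) (p * k) - A_lam lam ms k"
proof (rule pow_dvd_diff_of_ratio_cong[OF p cong _ assms(10,11)])
  show "p ^ (2 * (R - t)) dvd A_lam lam ms k"
    using assms(1-5) t by (cases "t < R") (auto intro: pow_dvd_A_lam)
qed

lemma ratio_cong_zmultinom_uniform:
  fixes p k :: int
  assumes p: "prime p" and c: "1 \<le> c" "int c < p" and base: "const_mod (p ^ c) (block_poly p)"
    and "\<forall>x\<in>set ms. p ^ t dvd x" "p ^ t dvd k"
  shows "ratio_cong p (p ^ (c + 3 * t)) (zmultinom (map (\<lambda>x. p * x) ms) (p * k)) (zmultinom ms k)
    (multinom_sign p ms k)"
proof (rule ratio_cong_zmultinom[OF p c base])
  fix i assume "i < length ms"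
  then show "\<exists>e1 e2 e3. c + 3 * t \<le> c + e1 + e2 + e3 \<and> p ^ e1 dvd multinom_top ms k i \<and>
      p ^ e2 dvd multinom_bot ms k i \<and> p ^ e3 dvd multinom_top ms k i - multinom_bot ms k i"
    using pow_dvd_multinom_entries[OF assms(5,6)] by (intro exI[of _ t]) auto
qed

lemma ratio_cong_zmultinom_short:
  fixes p k :: int
  assumes p: "prime p" and c: "1 \<le> c" "int c < p" and base: "const_mod (p ^ c) (block_poly p)"
    and "length ms \<le> 2" "\<forall>x\<in>set ms. p ^ R dvd x" "t \<le> R" "p ^ t dvd k"
  shows "ratio_cong p (p ^ (c + R + 2 * t)) (zmultinom (map (\<lambda>x. p * x) ms) (p * k)) (zmultinom ms k)
    (multinom_sign p ms k)"
proof (rule ratio_cong_zmultinom[OF p c base])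
  fix i assume i: "i < length ms"
  have "\<forall>x\<in>set ms. p ^ t dvd x"
    using assms(6) le_imp_power_dvd[OF \<open>t \<le> R\<close>] dvd_trans by blast
  note entries = pow_dvd_multinom_entries[OF this \<open>p ^ t dvd k\<close> i]
  have "ms ! 0 \<in> set ms" using i by (intro nth_mem) auto
  then have "p ^ R dvd ms ! 0" using assms(6) by blast
  then consider "i = 0" "p ^ R dvd multinom_top ms k i"
    | "i = 1" "p ^ R dvd multinom_top ms k i - multinom_bot ms k i"
  proof -
    have "i = 0 \<or> i = 1" using i \<open>length ms \<le> 2\<close> by auto
    moreover have "sum_list (take 1 ms) = ms ! 0" using i by (cases ms) auto
    ultimately show ?thesis
      using that i \<open>p ^ R dvd ms ! 0\<close> multinom_top_minus_bot[of 1 ms k]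
      by (auto simp: multinom_top_0)
  qed
  then show "\<exists>e1 e2 e3. c + R + 2 * t \<le> c + e1 + e2 + e3 \<and> p ^ e1 dvd multinom_top ms k i \<and>
      p ^ e2 dvd multinom_bot ms k i \<and> p ^ e3 dvd multinom_top ms k i - multinom_bot ms k i"
  proof cases
    case 1
    then show ?thesis using entries by (intro exI[of _ R] exI[of _ t]) auto
  next
    case 2
    then show ?thesis using entries by (intro exI[of _ t] exI[of _ t] exI[of _ R]) auto
  qed
qed

lemma A_lam_scaled_cong_odd:
  fixes p k :: int
  assumes p: "prime p" "odd p" and "length lam \<ge> 2" "\<forall>x\<in>set lam. x > 0"
    and "length ms = sum_list lam" "\<forall>x\<in>set ms. p ^ R dvd x"
    and block: "\<And>t j. t \<le> R \<Longrightarrow> p ^ t dvd k \<Longrightarrow> j < length lam \<Longrightarrow>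
      ratio_cong p (p ^ E t) (zmultinom (map (\<lambda>x. p * x) (lam_block lam ms j)) (p * k))
        (zmultinom (lam_block lam ms j) k) (multinom_sign p (lam_block lam ms j) k)"
    and "\<And>t. t \<le> R \<Longrightarrow> T \<le> 2 * (R - t) + E t"
  shows "p ^ T dvd A_lam lam (map (\<lambda>x. p * x) ms) (p * k) - A_lam lam ms k"
proof -
  obtain t where t: "t \<le> R" "p ^ t dvd k" "t < R \<longrightarrow> \<not> p ^ Suc t dvd k"
    using exists_exact_pow_dvd by blast
  have "ratio_cong p (p ^ E t) (A_lam lam (map (\<lambda>x. p * x) ms) (p * k)) (A_lam lam ms k)
      (A_lam_sign p lam ms k)"
    using block t by (intro ratio_cong_A_lam p(1)) auto
  moreover have "A_lam_sign p lam ms k = 1"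
    using \<open>odd p\<close> by (simp add: A_lam_sign_def multinom_sign_def binom_sign_def)
  ultimately show ?thesis
    using A_lam_scaled_cong[OF p(1) assms(3-6) t _ assms(8)[OF t(1)]] by simp
qed

lemma A_lam_cong_odd_prime:
  fixes p k :: int
  assumes p: "prime p" "odd p" and "length lam \<ge> 2" "\<forall>x\<in>set lam. x > 0"
    and len: "length ms = sum_list lam" and ms: "\<forall>x\<in>set ms. p ^ R dvd x"
  shows "p ^ (2 * Suc R) dvd A_lam lam (map (\<lambda>x. p * x) ms) (p * k) - A_lam lam ms k"
proof (rule A_lam_scaled_cong_odd[OF p assms(3-6), where E = "\<lambda>t. 2 + 3 * t"])
  fix t j assume "t \<le> R" "p ^ t dvd k" "j < length lam"
  have "int 2 < p" using p prime_ge_2_int[OF p(1)] by (cases "p = 2") auto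
  moreover have "\<forall>x\<in>set ms. p ^ t dvd x"
    using ms le_imp_power_dvd[OF \<open>t \<le> R\<close>] dvd_trans by blast
  then have "\<forall>x\<in>set (lam_block lam ms j). p ^ t dvd x"
    by (rule ball_set_lam_block)
  ultimately show "ratio_cong p (p ^ (2 + 3 * t)) (zmultinom (map (\<lambda>x. p * x) (lam_block lam ms j)) (p * k))
      (zmultinom (lam_block lam ms j) k) (multinom_sign p (lam_block lam ms j) k)"
    using p const_mod_block_poly_odd \<open>p ^ t dvd k\<close> by (intro ratio_cong_zmultinom_uniform) auto
qed simp

lemma A_lam_cong_short_blocks:
  fixes p k :: int
  assumes p: "prime p" "p \<ge> 5" and "length lam \<ge> 2" "\<forall>x\<in>set lam. x > 0" "Max (set lam) \<le> 2"
    and len: "length ms = sum_list lam" and ms: "\<forall>x\<in>set ms. p ^ R dvd x"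
  shows "p ^ (3 * Suc R) dvd A_lam lam (map (\<lambda>x. p * x) ms) (p * k) - A_lam lam ms k"
proof (rule A_lam_scaled_cong_odd[OF p(1) _ assms(3,4) len ms, where E = "\<lambda>t. 3 + R + 2 * t"])
  show "odd p" using p by (intro prime_odd_int) auto
  fix t j assume "t \<le> R" "p ^ t dvd k" "j < length lam"
  then have "lam ! j \<le> 2"
    using \<open>Max (set lam) \<le> 2\<close> by (metis List.finite_set Max_ge nth_mem order_trans)
  then have "length (lam_block lam ms j) \<le> 2"
    using length_lam_block[OF len \<open>j < length lam\<close>] by simp
  moreover have "\<forall>x\<in>set (lam_block lam ms j). p ^ R dvd x"
    using ms by (rule ball_set_lam_block)
  ultimately show "ratio_cong p (p ^ (3 + R + 2 * t)) (zmultinom (map (\<lambda>x. p * x) (lam_block lam ms j)) (p * k))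
      (zmultinom (lam_block lam ms j) k) (multinom_sign p (lam_block lam ms j) k)"
    using p const_mod_block_poly_ge_5 \<open>t \<le> R\<close> \<open>p ^ t dvd k\<close>
    by (intro ratio_cong_zmultinom_short) auto
qed simp

section \<open>The prime 2\<close>

lemma two_power_dvd_one_of_three:
  fixes a b :: int
  assumes "2 ^ t dvd a" "2 ^ t dvd b"
  shows "2 ^ Suc t dvd a \<or> 2 ^ Suc t dvd b \<or> 2 ^ Suc t dvd a - b"
proof -
  obtain a' b' where ab: "a = 2 ^ t * a'" "b = 2 ^ t * b'"
    using assms by (auto elim!: dvdE)
  then have "a - b = 2 ^ t * (a' - b')" by (simp add: algebra_simps)
  moreover have "even a' \<or> even b' \<or> even (a' - b')" by auto
  ultimately show ?thesis
    using ab by (auto simp: mult_dvd_mono)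
qed

lemma ratio_cong_zmultinom_two:
  fixes k :: int
  assumes "\<forall>x\<in>set ms. 2 ^ t dvd x" "2 ^ t dvd k"
  shows "ratio_cong 2 (2 ^ (2 + 3 * t)) (zmultinom (map (\<lambda>x. 2 * x) ms) (2 * k)) (zmultinom ms k)
    (multinom_sign 2 ms k)"
proof (rule ratio_cong_zmultinom[where c = 1])
  show "const_mod (2 ^ 1) (block_poly 2)" using const_mod_block_poly[of 2] by simp
  fix i assume "i < length ms"
  note entries = pow_dvd_multinom_entries[OF assms this]
  from two_power_dvd_one_of_three[OF entries(1,2)]
  show "\<exists>e1 e2 e3. 2 + 3 * t \<le> 1 + e1 + e2 + e3 \<and> (2::int) ^ e1 dvd multinom_top ms k i \<and>
      2 ^ e2 dvd multinom_bot ms k i \<and> 2 ^ e3 dvd multinom_top ms k i - multinom_bot ms k i"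
  proof (elim disjE)
    assume "2 ^ Suc t dvd multinom_top ms k i"
    then show ?thesis using entries by (intro exI[of _ "Suc t"] exI[of _ t]) auto
  next
    assume "2 ^ Suc t dvd multinom_bot ms k i"
    then show ?thesis using entries by (intro exI[of _ t] exI[of _ "Suc t"] exI[of _ t]) auto
  next
    assume "2 ^ Suc t dvd multinom_top ms k i - multinom_bot ms k i"
    then show ?thesis using entries by (intro exI[of _ t] exI[of _ t] exI[of _ "Suc t"]) auto
  qed
qed simp_all

lemma even_zbinom_of_binom_sign:
  assumes "binom_sign 2 a b \<noteq> 1"
  shows "even (zbinom a b)"
proof -
  have "odd b" "even a" using assms by (auto simp: binom_sign_def split: if_splits)
  then have "even (b * zbinom a b)" by (simp add: zbinom_absorption)
  then show ?thesis using \<open>odd b\<close> by simp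
qed

lemma binom_sign_two_even_block:
  assumes "\<forall>x\<in>set ms. even x" "odd k" "i < length ms"
  shows "binom_sign 2 (multinom_top ms k i) (multinom_bot ms k i) = (if even i then -1 else 1)"
proof -
  have "even (sum_list (take i ms))"
    using assms(1) by (intro dvd_sum_list) (auto dest: in_set_takeD)
  then have "odd (multinom_top ms k i - multinom_bot ms k i) \<longleftrightarrow> even i"
    using \<open>odd k\<close> by (simp add: multinom_top_minus_bot[OF assms(3)])
  moreover have "odd (multinom_bot ms k i)"
    using assms by (simp add: multinom_bot_def)
  ultimately show ?thesis
    by (simp add: binom_sign_def)
qed

lemma multinom_sign_two_short_even_block:
  assumes "\<forall>x\<in>set ms. even x" "odd k" "ms \<noteq> []" "length ms \<le> 2"
  shows "multinom_sign 2 ms k = -1"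
proof -
  note sign = binom_sign_two_even_block[OF assms(1,2)]
  have "length ms = 1 \<or> length ms = 2"
    using assms(3,4) by (cases "length ms") auto
  then consider "length ms = 1" | "length ms = 2" by blast
  then show ?thesis
    by cases (simp_all add: multinom_sign_def sign numeral_2_eq_2 lessThan_Suc)
qed

lemma two_pow_dvd_zmultinom_long_even_block:
  fixes k :: int
  assumes "\<forall>x\<in>set ms. 2 ^ R dvd x" "1 \<le> R" "odd k" "3 \<le> length ms"
  shows "2 ^ Suc R dvd zmultinom ms k"
proof -
  have "(2::int) dvd 2 ^ R" using \<open>1 \<le> R\<close> by simp
  then have "\<forall>x\<in>set ms. even x"
    using assms(1) dvd_trans by blast
  then have "even (zbinom (multinom_top ms k 2) (multinom_bot ms k 2))"
    using binom_sign_two_even_block[of ms k 2] assms by (intro even_zbinom_of_binom_sign) simp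
  moreover have "ms \<noteq> []" using assms(4) by auto
  then have "2 ^ R dvd zbinom (multinom_top ms k 0) (multinom_bot ms k 0)"
    using pow_dvd_zbinom_first[of 2 ms R 0 k] assms by simp
  ultimately have "2 ^ R * 2 dvd zbinom (multinom_top ms k 0) (multinom_bot ms k 0)
      * zbinom (multinom_top ms k 2) (multinom_bot ms k 2)"
    by (rule mult_dvd_mono[rotated])
  also have "\<dots> = (\<Prod>i\<in>{0, 2}. zbinom (multinom_top ms k i) (multinom_bot ms k i))"
    by simp
  also have "\<dots> dvd zmultinom ms k"
    unfolding zmultinom_eq_prod using assms(4) by (intro prod_dvd_prod_subset) auto
  finally show ?thesis by (simp add: mult.commute)
qed

lemma binom_sign_square: "(binom_sign p a b)\<^sup>2 = 1"
  by (simp add: binom_sign_def)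

lemma A_lam_sign_cases: "A_lam_sign p lam ms k = 1 \<or> A_lam_sign p lam ms k = -1"
proof -
  have "(A_lam_sign p lam ms k)\<^sup>2 = 1"
    by (simp add: A_lam_sign_def multinom_sign_def prod_power_distrib binom_sign_square)
  then show ?thesis by (simp add: power2_eq_1_iff)
qed

lemma A_lam_sign_two_of_even_bot:
  assumes "\<forall>x\<in>set ms. even x" "even k"
  shows "A_lam_sign 2 lam ms k = 1"
proof -
  have "even (multinom_bot (lam_block lam ms j) k i)" if "i < length (lam_block lam ms j)" for i j
  proof -
    have "\<forall>x\<in>set (lam_block lam ms j). even x" by (rule ball_set_lam_block[OF assms(1)])
    then show ?thesis using that assms(2) by (simp add: multinom_bot_def)
  qed
  then show ?thesis
    by (simp add: A_lam_sign_def multinom_sign_def binom_sign_def)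
qed

lemma two_dvd_A_lam_of_sign:
  assumes "A_lam_sign 2 lam ms k \<noteq> 1"
  shows "even (A_lam lam ms k)"
proof -
  obtain j i where ji: "j < length lam" "i < length (lam_block lam ms j)"
    and sign: "binom_sign 2 (multinom_top (lam_block lam ms j) k i) (multinom_bot (lam_block lam ms j) k i) \<noteq> 1"
    using assms unfolding A_lam_sign_def multinom_sign_def by (meson prod.neutral lessThan_iff)
  from sign have "even (zbinom (multinom_top (lam_block lam ms j) k i) (multinom_bot (lam_block lam ms j) k i))"
    by (rule even_zbinom_of_binom_sign)
  also have "\<dots> dvd zmultinom (lam_block lam ms j) k"
    unfolding zmultinom_eq_prod using ji by (intro dvd_prodI) auto
  also have "\<dots> dvd A_lam lam ms k"
    unfolding A_lam_eq_prod using ji by (intro dvd_prodI) auto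
  finally show ?thesis .
qed

lemma two_pow_dvd_A_lam_of_odd:
  fixes k :: int
  assumes lam2: "length lam \<ge> 2" and pos: "\<forall>x\<in>set lam. x > 0" and len: "length ms = sum_list lam"
    and ms: "\<forall>x\<in>set ms. 2 ^ R dvd x" and "1 \<le> R" "odd k"
    and long: "3 \<le> length lam \<or> (\<exists>j<length lam. 3 \<le> lam ! j)"
  shows "2 ^ Suc (2 * R) dvd A_lam lam ms k"
proof -
  have block: "2 ^ R dvd zmultinom (lam_block lam ms j) k" if "j < length lam" for j
    using pow_dvd_zmultinom[of 2 _ R 0] lam_block_ne_Nil[OF pos len that] ball_set_lam_block[OF ms]
      \<open>1 \<le> R\<close> \<open>odd k\<close> by simp
  from long show ?thesis
  proof (elim disjE exE conjE)
    assume "3 \<le> length lam"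
    then have "(\<Prod>j\<in>{0, 1, 2::nat}. 2 ^ R) dvd A_lam lam ms k"
      by (intro prod_dvd_A_lam block) auto
    then have "2 ^ (3 * R) dvd A_lam lam ms k"
      by (simp add: power_add[symmetric] numeral_3_eq_3)
    moreover have "(2::int) ^ Suc (2 * R) dvd 2 ^ (3 * R)"
      using \<open>1 \<le> R\<close> by (intro le_imp_power_dvd) simp
    ultimately show ?thesis by (rule dvd_trans[rotated])
  next
    fix j assume j: "j < length lam" "3 \<le> lam ! j"
    define j' where "j' = (if j = 0 then 1 else 0 :: nat)"
    have j': "j' < length lam" "j' \<noteq> j" using lam2 by (auto simp: j'_def)
    have "2 ^ Suc R dvd zmultinom (lam_block lam ms j) k"
      using two_pow_dvd_zmultinom_long_even_block[OF ball_set_lam_block[OF ms]] assms(5,6) j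
        length_lam_block[OF len j(1)] by simp
    then have "(\<Prod>i\<in>{j, j'}. if i = j then 2 ^ Suc R else 2 ^ R) dvd A_lam lam ms k"
      using j j' by (intro prod_dvd_A_lam) (auto intro: block)
    then have "2 ^ (Suc R + R) dvd A_lam lam ms k"
      using j' by (simp add: power_add mult.assoc)
    moreover have "Suc R + R = Suc (2 * R)" by simp
    ultimately show ?thesis by metis
  qed
qed

lemma A_lam_sign_two_short_blocks:
  assumes "length lam = 2" "\<forall>j<length lam. lam ! j \<le> 2" and pos: "\<forall>x\<in>set lam. x > 0"
    and len: "length ms = sum_list lam" and "\<forall>x\<in>set ms. even x" "odd k"
  shows "A_lam_sign 2 lam ms k = 1"
proof -
  have "multinom_sign 2 (lam_block lam ms j) k = -1" if "j < length lam" for j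
    using assms(2) that length_lam_block[OF len that]
    by (intro multinom_sign_two_short_even_block[OF ball_set_lam_block[OF assms(5)] \<open>odd k\<close>
        lam_block_ne_Nil[OF pos len]]) auto
  then show ?thesis
    using assms(1) by (simp add: A_lam_sign_def numeral_2_eq_2 lessThan_Suc)
qed

text \<open>If all entries are even and k is odd, the i-th factor of a block has sign -1 exactly for
  even i; so a sign -1 forces a third block or a block with a third factor.\<close>

lemma two_pow_dvd_A_lam_of_sign:
  fixes k :: int
  assumes lam2: "length lam \<ge> 2" and pos: "\<forall>x\<in>set lam. x > 0" and len: "length ms = sum_list lam"
    and ms: "\<forall>x\<in>set ms. 2 ^ R dvd x" and sign: "A_lam_sign 2 lam ms k \<noteq> 1"
  shows "2 ^ Suc (2 * R) dvd A_lam lam ms k"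
proof (cases "R = 0")
  case True
  then show ?thesis using two_dvd_A_lam_of_sign[OF sign] by simp
next
  case False
  have "(2::int) dvd 2 ^ R" using False by simp
  then have even: "\<forall>x\<in>set ms. even x" using ms dvd_trans by blast
  then have "odd k" using A_lam_sign_two_of_even_bot sign by blast
  have "3 \<le> length lam \<or> (\<exists>j<length lam. 3 \<le> lam ! j)"
    using A_lam_sign_two_short_blocks[OF _ _ pos len even \<open>odd k\<close>] sign lam2 by fastforce
  then show ?thesis
    using False \<open>odd k\<close> by (intro two_pow_dvd_A_lam_of_odd[OF lam2 pos len ms]) auto
qed

lemma A_lam_cong_two:
  fixes k :: int
  assumes "length lam \<ge> 2" "\<forall>x\<in>set lam. x > 0"
    and len: "length ms = sum_list lam" and ms: "\<forall>x\<in>set ms. 2 ^ R dvd x"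
  shows "2 ^ (2 * Suc R) dvd A_lam lam (map (\<lambda>x. 2 * x) ms) (2 * k) - A_lam lam ms k"
proof -
  obtain t where t: "t \<le> R" "(2::int) ^ t dvd k" "t < R \<longrightarrow> \<not> (2::int) ^ Suc t dvd k"
    using exists_exact_pow_dvd by blast
  have "\<forall>x\<in>set ms. (2::int) ^ t dvd x"
    using ms le_imp_power_dvd[OF t(1)] dvd_trans by blast
  then have "ratio_cong 2 (2 ^ (2 + 3 * t)) (A_lam lam (map (\<lambda>x. 2 * x) ms) (2 * k)) (A_lam lam ms k)
      (A_lam_sign 2 lam ms k)"
    using t(2) by (intro ratio_cong_A_lam ratio_cong_zmultinom_two ball_set_lam_block) auto
  moreover have "A_lam_sign 2 lam ms k = 1 \<or>
      (A_lam_sign 2 lam ms k = -1 \<and> 2 ^ (2 * Suc R) dvd 2 * A_lam lam ms k)"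
    using A_lam_sign_cases two_pow_dvd_A_lam_of_sign[OF assms] by fastforce
  ultimately show ?thesis
    using t by (intro A_lam_scaled_cong[OF _ assms t, where E = "2 + 3 * t"]) auto
qed

lemma A_lam_cong_prime:
  fixes p k :: int
  assumes "prime p" "length lam \<ge> 2" "\<forall>x\<in>set lam. x > 0"
    and "length ms = sum_list lam" "\<forall>x\<in>set ms. p ^ R dvd x"
  shows "p ^ (2 * Suc R) dvd A_lam lam (map (\<lambda>x. p * x) ms) (p * k) - A_lam lam ms k"
proof (cases "p = 2")
  case True
  then show ?thesis using A_lam_cong_two assms(2-5) by simp
next
  case False
  then have "odd p" using assms(1) prime_ge_2_int[OF assms(1)] by (intro prime_odd_int) auto
  then show ?thesis by (rule A_lam_cong_odd_prime[OF assms(1) _ assms(2-5)])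
qed

lemma cong_A_lam_of_scaled:
  fixes p k :: int
  assumes "r \<ge> 1" "length ns = sum_list lam"
    and "\<And>ms. length ms = sum_list lam \<Longrightarrow> \<forall>x\<in>set ms. p ^ (r - 1) dvd x \<Longrightarrow>
      p ^ (N * Suc (r - 1)) dvd A_lam lam (map (\<lambda>x. p * x) ms) (p * k) - A_lam lam ms k"
  shows "[A_lam lam (map (\<lambda>x. p ^ r * x) ns) (p * k) = A_lam lam (map (\<lambda>x. p ^ (r - 1) * x) ns) k]
    (mod p ^ (N * r))"
proof -
  define ms where "ms = map (\<lambda>x. p ^ (r - 1) * x) ns"
  have "p ^ (N * Suc (r - 1)) dvd A_lam lam (map (\<lambda>x. p * x) ms) (p * k) - A_lam lam ms k"
    by (rule assms(3)) (simp_all add: ms_def assms(2))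
  moreover have "map (\<lambda>x. p * x) ms = map (\<lambda>x. p ^ r * x) ns"
    using \<open>r \<ge> 1\<close> by (cases r) (simp_all add: ms_def mult.assoc)
  moreover have "Suc (r - 1) = r" using \<open>r \<ge> 1\<close> by simp
  ultimately have "p ^ (N * r) dvd A_lam lam (map (\<lambda>x. p ^ r * x) ns) (p * k) - A_lam lam ms k"
    by metis
  then show ?thesis
    unfolding ms_def cong_iff_dvd_diff .
qed

theorem lemma5p3:
  fixes lam :: "nat list"
  assumes "length lam \<ge> 2"
    and "\<forall>x\<in>set lam. x > 0"
  shows "(\<forall>(p::int) (r::nat) (ns::int list) (k::int).
            prime p \<and> r \<ge> 1 \<and> length ns = sum_list lam \<longrightarrow>
            [A_lam lam (map (\<lambda>x. p ^ r * x) ns) (p * k)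
               = A_lam lam (map (\<lambda>x. p ^ (r - 1) * x) ns) k] (mod p ^ (2 * r)))
       \<and> (Max (set lam) \<le> 2 \<longrightarrow>
          (\<forall>(p::int) (r::nat) (ns::int list) (k::int).
            prime p \<and> p \<ge> 5 \<and> r \<ge> 1 \<and> length ns = sum_list lam \<longrightarrow>
            [A_lam lam (map (\<lambda>x. p ^ r * x) ns) (p * k)
               = A_lam lam (map (\<lambda>x. p ^ (r - 1) * x) ns) k] (mod p ^ (3 * r))))"
proof (intro conjI allI impI; elim conjE)
  fix p k :: int and r :: nat and ns :: "int list"
  assume "prime p" "r \<ge> 1" "length ns = sum_list lam"
  show "[A_lam lam (map (\<lambda>x. p ^ r * x) ns) (p * k)
      = A_lam lam (map (\<lambda>x. p ^ (r - 1) * x) ns) k] (mod p ^ (2 * r))"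
    by (rule cong_A_lam_of_scaled[OF \<open>r \<ge> 1\<close> \<open>length ns = sum_list lam\<close> A_lam_cong_prime[OF \<open>prime p\<close> assms]])
next
  fix p k :: int and r :: nat and ns :: "int list"
  assume "Max (set lam) \<le> 2" "prime p" "p \<ge> 5" "r \<ge> 1" "length ns = sum_list lam"
  show "[A_lam lam (map (\<lambda>x. p ^ r * x) ns) (p * k)
      = A_lam lam (map (\<lambda>x. p ^ (r - 1) * x) ns) k] (mod p ^ (3 * r))"
    by (rule cong_A_lam_of_scaled[OF \<open>r \<ge> 1\<close> \<open>length ns = sum_list lam\<close>
        A_lam_cong_short_blocks[OF \<open>prime p\<close> \<open>p \<ge> 5\<close> assms \<open>Max (set lam) \<le> 2\<close>]])
qed

end
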